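(* Let $\vec{p}=(p_1,\dots,p_n)$ with $1<\vec{p}<\infty$, let $-\frac{1}{n}\sum_{i=1}^n\frac{1}{p_i}<\lambda<0$, and let $\vec{p}'=(p_1',\dots,p_n')$ with $p_i'=p_i/(p_i-1)$. Then (a) $\mathcal{H}$ is bounded from $\mathcal{B}^{\vec{p},\lambda}(\mathbb{R}^n)$ to $\mathcal{B}^{\vec{p},\lambda}(\mathbb{R}^n)$; (b) $\mathcal{H}^*$ is bounded from $\mathcal{B}^{\vec{p}',\lambda}(\mathbb{R}^n)$ to $\mathcal{B}^{\vec{p}',\lambda}(\mathbb{R}^n)$.
   Context: For an exponent vector $\vec{p}$ with $0<p_i<\infty$, the mixed Lebesgue norm is $\|f\|_{L^{\vec{p}}}=\Big(\int_{\mathbb{R}}\cdots\Big(\int_{\mathbb{R}}\Big(\int_{\mathbb{R}}|f(x_1,\dots,x_n)|^{p_1}dx_1\Big)^{p_2/p_1}dx_2\Big)^{p_3/p_2}\cdots dx_n\Big)^{1/p_n}$. For $\lambda\in\mathbb{R}$, the mixed $\lambda$-central Morrey space $\mathcal{B}^{\vec{p},\lambda}(\mathbb{R}^n)$ consists of measurable $f$ with $\|f\|_{\mathcal{B}^{\vec{p},\lambda}}=\sup_{r>0}\frac{\|f\chi_{B(0,r)}\|_{L^{\vec p}}}{|B(0,r)|^{\lambda}\|\chi_{B(0,r)}\|_{L^{\vec p}}}<\infty$, $\chi_B$ being the indicator of $B$. $\mathcal{H}f(x)=|x|^{-n}\int_{|t|<|x|}f(t)\,dt$ and $\mathcal{H}^*f(x)=\int_{|t|\ge|x|}f(t)|t|^{-n}\,dt$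 for $x\ne0$. Boundedness from $X$ to $Y$ means $\|Tf\|_Y\le C\|f\|_X$ for all $f\in X$. *)

theory Defs
  imports "HOL-Analysis.Analysis"
begin

text \<open>Points of R^n are represented as extensional functions nat => real on the index
set {..<n}; coordinate x_(i+1) of the paper is x i here.\<close>

definition Rn :: "nat \<Rightarrow> (nat \<Rightarrow> real) measure" where
  "Rn n = PiM {..<n} (\<lambda>_. lborel)"

definition enorm :: "nat \<Rightarrow> (nat \<Rightarrow> real) \<Rightarrow> real" where
  "enorm n x = sqrt (\<Sum>i<n. (x i)\<^sup>2)"

definition ball0 :: "nat \<Rightarrow> real \<Rightarrow> (nat \<Rightarrow> real) set" where
  "ball0 n r = {x \<in> space (Rn n). enorm n x < r}"

definition epowr :: "ennreal \<Rightarrow> real \<Rightarrow> ennreal" where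
  "epowr x a = (if x = \<infinity> then \<infinity> else ennreal (enn2real x powr a))"

text \<open>Iterated partial mixed norm: integrates out coordinates 0,...,k-1, innermost
coordinate 0 with exponent p 0, then coordinate 1 with exponent p 1, etc.\<close>
fun mixpart :: "(nat \<Rightarrow> real) \<Rightarrow> nat \<Rightarrow> ((nat \<Rightarrow> real) \<Rightarrow> real) \<Rightarrow> (nat \<Rightarrow> real) \<Rightarrow> ennreal" where
  "mixpart p 0 f x = ennreal \<bar>f x\<bar>"
| "mixpart p (Suc k) f x =
     epowr (\<integral>\<^sup>+ t. epowr (mixpart p k f (x(k := t))) (p k) \<partial>lborel) (1 / p k)"

definition mixnorm :: "nat \<Rightarrow> (nat \<Rightarrow> real) \<Rightarrow> ((nat \<Rightarrow> real) \<Rightarrow> real) \<Rightarrow> ennreal" where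
  "mixnorm n p f = mixpart p n f (\<lambda>_. undefined)"

definition indic_ball :: "nat \<Rightarrow> real \<Rightarrow> (nat \<Rightarrow> real) \<Rightarrow> real" where
  "indic_ball n r = indicator (ball0 n r)"

definition morrey_norm :: "nat \<Rightarrow> (nat \<Rightarrow> real) \<Rightarrow> real \<Rightarrow> ((nat \<Rightarrow> real) \<Rightarrow> real) \<Rightarrow> ennreal" where
  "morrey_norm n p lam f =
     (SUP r\<in>{0<..}. mixnorm n p (\<lambda>x. f x * indic_ball n r x)
        * ennreal (1 / (measure (Rn n) (ball0 n r) powr lam * enn2real (mixnorm n p (indic_ball n r)))))"

definition morrey_space :: "nat \<Rightarrow> (nat \<Rightarrow> real) \<Rightarrow> real \<Rightarrow> ((nat \<Rightarrow> real) \<Rightarrow> real) set" where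
  "morrey_space n p lam = {f. f \<in> borel_measurable (Rn n) \<and> morrey_norm n p lam f < \<infinity>}"

text \<open>Hardy operator and its adjoint (value at x = 0 is 0, irrelevant: a null set).\<close>
definition hardy :: "nat \<Rightarrow> ((nat \<Rightarrow> real) \<Rightarrow> real) \<Rightarrow> (nat \<Rightarrow> real) \<Rightarrow> real" where
  "hardy n f x = enorm n x powr (- real n) *
     (LINT t : {t \<in> space (Rn n). enorm n t < enorm n x} | Rn n. f t)"

definition hardy_adj :: "nat \<Rightarrow> ((nat \<Rightarrow> real) \<Rightarrow> real) \<Rightarrow> (nat \<Rightarrow> real) \<Rightarrow> real" where
  "hardy_adj n f x =
     (LINT t : {t \<in> space (Rn n). enorm n x \<le> enorm n t} | Rn n. f t * enorm n t powr (- real n))"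

definition bounded_op ::
  "(((nat \<Rightarrow> real) \<Rightarrow> real) \<Rightarrow> (nat \<Rightarrow> real) \<Rightarrow> real) \<Rightarrow> ((nat \<Rightarrow> real) \<Rightarrow> real) set
   \<Rightarrow> (((nat \<Rightarrow> real) \<Rightarrow> real) \<Rightarrow> ennreal) \<Rightarrow> (((nat \<Rightarrow> real) \<Rightarrow> real) \<Rightarrow> ennreal) \<Rightarrow> bool" where
  "bounded_op T X normX normY \<longleftrightarrow> (\<exists>C::real. \<forall>f\<in>X. normY (T f) \<le> ennreal C * normX f)"

end

theory Submission
  imports Defs
begin

text \<open>
Write s*x for the coordinatewise product of s and x. For x in B(0,r) the substitution t = s*x
dominates |H f(x)| by the average of dilates (integral of w_1(s) |f chi_B(0,r)|(s*x) ds), where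
w_e(s) = prod_i min(e, 1/|s_i|); for x in B(0,R) it dominates |H* f(x)| by the sum, over the dyadic
shells 2^k R <= |t| < 2^(k+1) R, of the averages of f chi_B(0,2^(k+1) R) with weight w_(2^-k).
Minkowski's integral inequality for the mixed norm and the scaling
||g(s*.)||_p = prod_i |s_i|^(-1/p_i) ||g||_p bound the mixed norm of such an average by
e^sigma prod_i c(p_i) ||g||_p, where sigma = sum_i 1/p_i and
c(q) = integral of min(1, 1/|u|) |u|^(-1/q) du, which is finite because q > 1.
For H this is already the Morrey bound. For H* the k-th term carries the factor 2^(-k sigma), while
the Morrey normalisation |B|^lambda ||chi_B||_p grows by 2^(n lambda + sigma) per doubling of the
radius; what remains is a geometric series in 2^(n lambda), which converges because lambda < 0.\<close>

section \<open>Powers of extended nonnegative reals\<close>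

lemma epowr_0 [simp]: "a > 0 \<Longrightarrow> epowr 0 a = 0"
  by (simp add: epowr_def)

lemma epowr_top [simp]: "epowr top a = top"
  by (simp add: epowr_def)

lemma epowr_ennreal: "0 \<le> c \<Longrightarrow> epowr (ennreal c) a = ennreal (c powr a)"
  by (simp add: epowr_def)

lemma epowr_eq_top_iff: "epowr x a = top \<longleftrightarrow> x = top"
  by (cases x) (auto simp: epowr_def)

lemma epowr_eq_0_iff: "a > 0 \<Longrightarrow> epowr x a = 0 \<longleftrightarrow> x = 0"
  by (cases x) (auto simp: epowr_def)

lemma epowr_mono:
  assumes "x \<le> y" "a > 0"
  shows "epowr x a \<le> epowr y a"
proof (cases "y = top")
  case False
  then obtain u v where uv: "x = ennreal u" "y = ennreal v" "0 \<le> u" "u \<le> v"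
    using assms(1) by (cases x; cases y) (auto simp: top_unique)
  then show ?thesis
    using assms(2) by (simp add: epowr_ennreal powr_mono2)
qed simp

lemma epowr_one [simp]: "epowr x 1 = x"
  by (cases x) (auto simp: epowr_def)

lemma epowr_epowr: "a > 0 \<Longrightarrow> b > 0 \<Longrightarrow> epowr (epowr x a) b = epowr x (a * b)"
  by (cases x) (simp_all add: epowr_def powr_powr)

lemma epowr_epowr_inverse: "a > 0 \<Longrightarrow> epowr (epowr x a) (1 / a) = x"
  by (cases x) (simp_all add: epowr_def powr_powr)

lemma epowr_mult:
  assumes "a > 0"
  shows "epowr (x * y) a = epowr x a * epowr y a"
proof (cases "x = 0 \<or> y = 0")
  case False
  show ?thesis
  proof (cases "x = top \<or> y = top")
    case True
    then show ?thesis
      using False assms by (auto simp: ennreal_mult_eq_top_iff epowr_eq_top_iff epowr_eq_0_iff)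
  next
    case False
    then obtain u v where "x = ennreal u" "y = ennreal v" "u \<ge> 0" "v \<ge> 0"
      by (cases x; cases y) auto
    then show ?thesis
      by (simp add: epowr_ennreal ennreal_mult'[symmetric] powr_mult)
  qed
qed (use assms in auto)

lemma epowr_cmult: "a > 0 \<Longrightarrow> c \<ge> 0 \<Longrightarrow> epowr (ennreal c * y) a = ennreal (c powr a) * epowr y a"
  by (simp add: epowr_mult epowr_ennreal)

lemma epowr_add: "a > 0 \<Longrightarrow> b > 0 \<Longrightarrow> epowr x (a + b) = epowr x a * epowr x b"
  by (cases x) (simp_all add: epowr_def powr_add ennreal_mult)

lemma measurable_epowr [measurable]:
  assumes [measurable]: "f \<in> borel_measurable M"
  shows "(\<lambda>x. epowr (f x) a) \<in> borel_measurable M"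
  unfolding epowr_def by measurable

section \<open>The inequalities of H\<ouml>lder and Minkowski for nonnegative integrals\<close>

lemma Youngs_inequality_weighted:
  fixes u v \<alpha> \<beta> p q :: real
  assumes "p > 1" "q > 1" "1/p + 1/q = 1" "u \<ge> 0" "v \<ge> 0" "\<alpha> > 0" "\<beta> > 0"
  shows "u * v \<le> \<alpha> * \<beta> / (p * \<alpha> powr p) * u powr p + \<alpha> * \<beta> / (q * \<beta> powr q) * v powr q"
proof -
  have "(u/\<alpha>) * (v/\<beta>) \<le> (u/\<alpha>) powr p / p + (v/\<beta>) powr q / q"
    using Youngs_inequality[of p q "u/\<alpha>" "v/\<beta>"] assms by simp
  then have "\<alpha> * \<beta> * ((u/\<alpha>) * (v/\<beta>)) \<le> \<alpha> * \<beta> * ((u/\<alpha>) powr p / p + (v/\<beta>) powr q / q)"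
    using assms by (intro mult_left_mono) auto
  then show ?thesis
    using assms by (simp add: powr_divide field_simps)
qed

lemma Youngs_inequality_ennreal:
  fixes x y :: ennreal and p q \<alpha> \<beta> :: real
  assumes "p > 1" "q > 1" "1/p + 1/q = 1" "\<alpha> > 0" "\<beta> > 0"
  shows "x * y \<le> ennreal (\<alpha> * \<beta> / (p * \<alpha> powr p)) * epowr x p
                 + ennreal (\<alpha> * \<beta> / (q * \<beta> powr q)) * epowr y q"
proof (cases "x = 0 \<or> y = 0")
  case nonzero: False
  show ?thesis
  proof (cases "x = top \<or> y = top")
    case True
    then show ?thesis
      using assms by (auto simp: ennreal_mult_eq_top_iff epowr_eq_top_iff)
  next
    case False
    then obtain u v where uv: "x = ennreal u" "y = ennreal v" "u \<ge> 0" "v \<ge> 0"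
      by (cases x; cases y) auto
    have "u * v \<le> \<alpha> * \<beta> / (p * \<alpha> powr p) * u powr p + \<alpha> * \<beta> / (q * \<beta> powr q) * v powr q"
      by (rule Youngs_inequality_weighted) (use assms uv in auto)
    then show ?thesis
      using uv assms
      by (simp add: epowr_ennreal ennreal_mult'[symmetric] ennreal_plus[symmetric] del: ennreal_plus)
  qed
qed auto

lemma nn_integral_mult_eq_0_if_epowr_eq_0:
  assumes "p > 0" "(\<integral>\<^sup>+x. epowr (f x) p \<partial>M) = 0"
    and [measurable]: "f \<in> borel_measurable M" "g \<in> borel_measurable M"
  shows "(\<integral>\<^sup>+x. f x * g x \<partial>M) = 0"
proof -
  have "AE x in M. epowr (f x) p = 0"
    using assms(2) by (simp add: nn_integral_0_iff_AE)
  then have "AE x in M. f x * g x = 0"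
    by eventually_elim (use assms(1) in \<open>simp add: epowr_eq_0_iff\<close>)
  then show ?thesis
    by (simp add: nn_integral_0_iff_AE)
qed

lemma nn_integral_Hoelder_finite:
  assumes pq: "p > 1" "q > 1" "1/p + 1/q = 1"
    and [measurable]: "f \<in> borel_measurable M" "g \<in> borel_measurable M"
    and A: "(\<integral>\<^sup>+x. epowr (f x) p \<partial>M) = ennreal a" "a > 0"
    and B: "(\<integral>\<^sup>+x. epowr (g x) q \<partial>M) = ennreal b" "b > 0"
  shows "(\<integral>\<^sup>+x. f x * g x \<partial>M) \<le> ennreal (a powr (1/p) * b powr (1/q))"
proof -
  define \<alpha> \<beta> where "\<alpha> = a powr (1/p)" and "\<beta> = b powr (1/q)"
  have \<alpha>\<beta>: "\<alpha> > 0" "\<beta> > 0" "\<alpha> powr p = a" "\<beta> powr q = b"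
    using A B pq by (auto simp: \<alpha>_def \<beta>_def powr_powr)
  have "(\<integral>\<^sup>+x. f x * g x \<partial>M)
      \<le> (\<integral>\<^sup>+x. ennreal (\<alpha> * \<beta> / (p * a)) * epowr (f x) p
              + ennreal (\<alpha> * \<beta> / (q * b)) * epowr (g x) q \<partial>M)"
    using Youngs_inequality_ennreal[OF pq \<alpha>\<beta>(1,2)] \<alpha>\<beta> by (intro nn_integral_mono) auto
  also have "\<dots> = ennreal (\<alpha> * \<beta> / (p * a)) * ennreal a + ennreal (\<alpha> * \<beta> / (q * b)) * ennreal b"
    using A B by (simp add: nn_integral_add nn_integral_cmult)
  also have "\<dots> = ennreal (\<alpha> * \<beta> * (1/p + 1/q))"
    using A B pq \<alpha>\<beta>
    by (simp add: ennreal_mult'[symmetric] ennreal_plus[symmetric] field_simps del: ennreal_plus)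
  finally show ?thesis
    using pq by (simp add: \<alpha>_def \<beta>_def)
qed

lemma nn_integral_Hoelder:
  assumes pq: "p > 1" "q > 1" "1/p + 1/q = 1"
    and [measurable]: "f \<in> borel_measurable M" "g \<in> borel_measurable M"
  shows "(\<integral>\<^sup>+x. f x * g x \<partial>M)
     \<le> epowr (\<integral>\<^sup>+x. epowr (f x) p \<partial>M) (1/p) * epowr (\<integral>\<^sup>+x. epowr (g x) q \<partial>M) (1/q)"
proof -
  define A B where "A = (\<integral>\<^sup>+x. epowr (f x) p \<partial>M)" and "B = (\<integral>\<^sup>+x. epowr (g x) q \<partial>M)"
  consider "A = 0 \<or> B = 0" | "A \<noteq> 0" "B \<noteq> 0" "A = top \<or> B = top"
    | "0 < A" "A < top" "0 < B" "B < top"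
    by (metis top.not_eq_extremum zero_less_iff_neq_zero)
  then have "(\<integral>\<^sup>+x. f x * g x \<partial>M) \<le> epowr A (1/p) * epowr B (1/q)"
  proof cases
    case 1
    have "(\<integral>\<^sup>+x. f x * g x \<partial>M) = 0"
    proof (rule disjE[OF 1])
      assume "A = 0"
      then show ?thesis
        using pq by (intro nn_integral_mult_eq_0_if_epowr_eq_0[where p=p]) (auto simp: A_def)
    next
      assume "B = 0"
      then have "(\<integral>\<^sup>+x. g x * f x \<partial>M) = 0"
        using pq by (intro nn_integral_mult_eq_0_if_epowr_eq_0[where p=q]) (auto simp: B_def)
      then show ?thesis
        by (simp add: mult.commute)
    qed
    then show ?thesis by simp
  next
    case 2
    have "epowr A (1/p) \<noteq> 0" "epowr B (1/q) \<noteq> 0" "epowr A (1/p) = top \<or> epowr B (1/q) = top"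
      using 2 pq by (simp_all add: epowr_eq_0_iff epowr_eq_top_iff)
    then have "epowr A (1/p) * epowr B (1/q) = top"
      by (simp add: ennreal_mult_eq_top_iff)
    then show ?thesis by simp
  next
    case 3
    then obtain a b where "A = ennreal a" "a > 0" "B = ennreal b" "b > 0"
      by (cases A; cases B) (auto simp: ennreal_less_zero_iff)
    then show ?thesis
      using nn_integral_Hoelder_finite[OF pq, where f=f and g=g and M=M and a=a and b=b]
      by (simp add: A_def B_def epowr_ennreal ennreal_mult)
  qed
  then show ?thesis
    by (simp add: A_def B_def)
qed

lemma le_epowr_if_le_epowr_mult:
  fixes I R :: ennreal
  assumes q: "q > 1" and fin: "I < top" and le: "I \<le> epowr I (1 - 1/q) * R"
  shows "I \<le> epowr R q"
proof (cases "I = 0 \<or> R = top")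
  case False
  obtain i where i: "I = ennreal i" "i > 0"
    using False fin by (cases I) (auto simp: less_le)
  obtain r where r: "R = ennreal r" "r \<ge> 0"
    using False by (cases R) auto
  have "i powr (1 - 1/q) * i powr (1/q) \<le> i powr (1 - 1/q) * r"
    using le i r by (simp add: epowr_ennreal ennreal_mult'[symmetric] powr_add[symmetric])
  then have "i powr (1/q) \<le> r"
    using i r by (simp add: mult_le_cancel_left_pos)
  then have "(i powr (1/q)) powr q \<le> r powr q"
    using q i r by (intro powr_mono2) auto
  then show ?thesis
    using q i r by (simp add: powr_powr epowr_ennreal)
qed auto

lemma epowr_le_SUP_truncation:
  fixes X :: ennreal and t :: real
  assumes q: "q \<ge> 1"
  shows "epowr X q \<le> (SUP N. epowr (min X (of_nat N) * indicator {-real N..real N} t) q)"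
proof (cases "X = top")
  case True
  have "(SUP N. epowr (min X (of_nat N) * indicator {-real N..real N} t) q) = top"
  proof (rule ennreal_SUP_eq_top)
    fix n :: nat
    obtain m :: nat where m: "\<bar>t\<bar> \<le> real m"
      using real_arch_simple by blast
    define N where "N = max n m + 1"
    have "real n \<le> real N powr 1"
      by (simp add: N_def)
    also have "\<dots> \<le> real N powr q"
      using q by (intro powr_mono) (auto simp: N_def)
    finally have "of_nat n \<le> epowr (of_nat N) q"
      by (simp add: ennreal_of_nat_eq_real_of_nat epowr_ennreal)
    moreover have "min X (of_nat N) * indicator {-real N..real N} t = of_nat N"
      using True m by (auto simp: N_def indicator_def)
    ultimately show "\<exists>N\<in>UNIV. of_nat n \<le> epowr (min X (of_nat N) * indicator {-real N..real N} t) q"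
      by (intro bexI[of _ N]) simp_all
  qed
  then show ?thesis
    by (simp only: top_greatest)
next
  case False
  then obtain n :: nat where n: "X < of_nat n"
    using ennreal_Ex_less_of_nat top.not_eq_extremum by blast
  obtain m :: nat where m: "\<bar>t\<bar> \<le> real m"
    using real_arch_simple by blast
  define N where "N = max n m"
  have "(of_nat n :: ennreal) \<le> of_nat N"
    by (simp add: N_def)
  then have "X \<le> of_nat N"
    using n by (meson less_imp_le order_trans)
  moreover have "t \<in> {-real N..real N}"
    using m by (auto simp: N_def)
  ultimately have "min X (of_nat N) * indicator {-real N..real N} t = X"
    by (simp add: min_absorb1)
  then show ?thesis
    using SUP_upper[of N UNIV "\<lambda>N. epowr (min X (of_nat N) * indicator {-real N..real N} t) q"] by simp
qed

lemma nn_integral_epowr_le_if_truncations_le: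
  fixes G :: "real \<Rightarrow> ennreal"
  assumes q: "q \<ge> 1" and [measurable]: "G \<in> borel_measurable lborel"
    and bound: "\<And>g. g \<in> borel_measurable lborel \<Longrightarrow> (\<And>t. g t \<le> G t) \<Longrightarrow>
                  (\<integral>\<^sup>+t. epowr (g t) q \<partial>lborel) < top \<Longrightarrow> (\<integral>\<^sup>+t. epowr (g t) q \<partial>lborel) \<le> B"
  shows "(\<integral>\<^sup>+t. epowr (G t) q \<partial>lborel) \<le> B"
proof -
  define GN where "GN N t = min (G t) (of_nat N) * indicator {-real N..real N} t" for N :: nat and t
  have GN_meas [measurable]: "GN N \<in> borel_measurable lborel" for N
    unfolding GN_def by measurable
  have GN_le: "GN N t \<le> G t" for N t
    unfolding GN_def by (cases "t \<in> {-real N..real N}") auto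
  have GN_finite: "(\<integral>\<^sup>+t. epowr (GN N t) q \<partial>lborel) < top" for N
  proof -
    have "epowr (GN N t) q \<le> ennreal (real N powr q) * indicator {-real N..real N} t" for t
      using epowr_mono[of "min (G t) (of_nat N)" "of_nat N" q] q
      by (auto simp: GN_def indicator_def ennreal_of_nat_eq_real_of_nat epowr_ennreal)
    then have "(\<integral>\<^sup>+t. epowr (GN N t) q \<partial>lborel)
        \<le> (\<integral>\<^sup>+t. ennreal (real N powr q) * indicator {-real N..real N} t \<partial>lborel)"
      by (intro nn_integral_mono)
    also have "\<dots> = ennreal (real N powr q) * ennreal (2 * real N)"
      by (simp add: nn_integral_cmult)
    also have "\<dots> < top"
      by (simp add: ennreal_mult_less_top)
    finally show ?thesis .
  qed
  have "(\<integral>\<^sup>+t. epowr (G t) q \<partial>lborel) \<le> (\<integral>\<^sup>+t. (SUP N. epowr (GN N t) q) \<partial>lborel)"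
    unfolding GN_def by (intro nn_integral_mono epowr_le_SUP_truncation q)
  also have "\<dots> = (SUP N. \<integral>\<^sup>+t. epowr (GN N t) q \<partial>lborel)"
  proof (rule nn_integral_monotone_convergence_SUP)
    have "min (G t) (of_nat N) \<le> min (G t) (of_nat (Suc N))" for N t
      by (rule min.mono) auto
    then have "GN N t \<le> GN (Suc N) t" for N t
      unfolding GN_def by (auto simp: indicator_def)
    then show "incseq (\<lambda>N t. epowr (GN N t) q)"
      using q by (intro incseq_SucI le_funI epowr_mono) auto
  qed measurable
  also have "\<dots> \<le> B"
    by (intro SUP_least bound GN_le GN_finite) measurable
  finally show ?thesis .
qed

text \<open>Minkowski's integral inequality, by duality: for a truncation g <= G with finite
integral of g^q, H\<ouml>lder's inequality gives (integral of g^q) <= (integral of g^q)^(1 - 1/q) * R.\<close>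

lemma nn_integral_Minkowski:
  fixes H :: "real \<Rightarrow> 'b \<Rightarrow> ennreal"
  assumes q: "q > 1" and sf: "sigma_finite_measure \<mu>"
    and H_meas [measurable]: "(\<lambda>(t, s). H t s) \<in> borel_measurable (lborel \<Otimes>\<^sub>M \<mu>)"
  shows "epowr (\<integral>\<^sup>+t. epowr (\<integral>\<^sup>+s. H t s \<partial>\<mu>) q \<partial>lborel) (1/q)
     \<le> (\<integral>\<^sup>+s. epowr (\<integral>\<^sup>+t. epowr (H t s) q \<partial>lborel) (1/q) \<partial>\<mu>)"
proof -
  interpret pair_sigma_finite lborel \<mu>
    by (intro pair_sigma_finite.intro sigma_finite_lborel sf)
  have [measurable]: "H t \<in> borel_measurable \<mu>" for t
    using measurable_Pair2[OF H_meas] by simp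
  have H_meas_t: "(\<lambda>t. H t s) \<in> borel_measurable lborel" if "s \<in> space \<mu>" for s
    using measurable_Pair1[OF H_meas] that by simp
  define R where "R = (\<integral>\<^sup>+s. epowr (\<integral>\<^sup>+t. epowr (H t s) q \<partial>lborel) (1/q) \<partial>\<mu>)"
  define G where "G t = (\<integral>\<^sup>+s. H t s \<partial>\<mu>)" for t
  define q' where "q' = q / (q - 1)"
  have q': "q' > 1" "1/q' + 1/q = 1" "1/q' = 1 - 1/q" "(q - 1) * q' = q"
    using q by (auto simp: q'_def field_simps)
  have "(\<integral>\<^sup>+t. epowr (G t) q \<partial>lborel) \<le> epowr R q"
  proof (rule nn_integral_epowr_le_if_truncations_le)
    fix g assume [measurable]: "g \<in> borel_measurable lborel"
      and g_le: "\<And>t. g t \<le> G t" and fin: "(\<integral>\<^sup>+t. epowr (g t) q \<partial>lborel) < top"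
    define I where "I = (\<integral>\<^sup>+t. epowr (g t) q \<partial>lborel)"
    have "I \<le> (\<integral>\<^sup>+t. epowr (g t) (q - 1) * G t \<partial>lborel)"
      unfolding I_def using q epowr_add[of "q - 1" 1 "g _"]
      by (intro nn_integral_mono) (auto intro: mult_left_mono g_le)
    also have "\<dots> = (\<integral>\<^sup>+s. (\<integral>\<^sup>+t. epowr (g t) (q - 1) * H t s \<partial>lborel) \<partial>\<mu>)"
      unfolding G_def by (simp add: nn_integral_cmult Fubini')
    also have "\<dots> \<le> (\<integral>\<^sup>+s. epowr (\<integral>\<^sup>+t. epowr (epowr (g t) (q - 1)) q' \<partial>lborel) (1/q')
                    * epowr (\<integral>\<^sup>+t. epowr (H t s) q \<partial>lborel) (1/q) \<partial>\<mu>)"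
      using q q' H_meas_t by (intro nn_integral_mono nn_integral_Hoelder) auto
    also have "\<dots> = epowr I (1 - 1/q) * R"
      using q q' by (simp add: I_def R_def epowr_epowr nn_integral_cmult)
    finally show "I \<le> epowr R q"
      using le_epowr_if_le_epowr_mult[OF q] fin by (simp add: I_def)
  qed (use q in \<open>auto simp: G_def\<close>)
  then have "epowr (\<integral>\<^sup>+t. epowr (G t) q \<partial>lborel) (1/q) \<le> epowr (epowr R q) (1/q)"
    using q by (intro epowr_mono) auto
  then show ?thesis
    using q by (simp add: epowr_epowr_inverse G_def R_def)
qed

section \<open>Iterated mixed norms of nonnegative functions\<close>

text \<open>\<open>emixpart\<close> is \<^const>\<open>mixpart\<close> for \<^typ>\<open>ennreal\<close>-valued functions; the coordinates
\<open>\<ge> k\<close> of the base point \<open>x\<close> are the ones not yet integrated out.\<close>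

fun emixpart :: "(nat \<Rightarrow> real) \<Rightarrow> nat \<Rightarrow> ((nat \<Rightarrow> real) \<Rightarrow> ennreal) \<Rightarrow> (nat \<Rightarrow> real) \<Rightarrow> ennreal" where
  "emixpart p 0 G x = G x"
| "emixpart p (Suc k) G x = epowr (\<integral>\<^sup>+t. epowr (emixpart p k G (x(k := t))) (p k) \<partial>lborel) (1 / p k)"

definition emixnorm :: "nat \<Rightarrow> (nat \<Rightarrow> real) \<Rightarrow> ((nat \<Rightarrow> real) \<Rightarrow> ennreal) \<Rightarrow> ennreal" where
  "emixnorm n p G = emixpart p n G (\<lambda>_. undefined)"

lemma mixpart_eq_emixpart: "mixpart p k f x = emixpart p k (\<lambda>y. ennreal \<bar>f y\<bar>) x"
  by (induction k arbitrary: x) simp_all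

lemma mixnorm_eq_emixnorm: "mixnorm n p f = emixnorm n p (\<lambda>y. ennreal \<bar>f y\<bar>)"
  by (simp add: mixnorm_def emixnorm_def mixpart_eq_emixpart)

lemma space_Rn: "space (Rn n) = {x. \<forall>i. n \<le> i \<longrightarrow> x i = undefined}"
  by (auto simp: Rn_def space_PiM PiE_def extensional_def)

lemma fun_upd_in_space_Rn: "x \<in> space (Rn n) \<Longrightarrow> k < n \<Longrightarrow> x(k := t) \<in> space (Rn n)"
  by (auto simp: space_Rn)

lemma undefined_in_space_Rn: "(\<lambda>_. undefined) \<in> space (Rn n)"
  by (auto simp: space_Rn)

lemma sigma_finite_Rn: "sigma_finite_measure (Rn n)"
proof -
  interpret product_sigma_finite "\<lambda>_. lborel"
    by standard
  show ?thesis
    unfolding Rn_def by (rule sigma_finite) simp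
qed

lemma measurable_fun_upd_Rn [measurable]:
  "x \<in> space (Rn n) \<Longrightarrow> k < n \<Longrightarrow> (\<lambda>t. x(k := t)) \<in> measurable lborel (Rn n)"
  unfolding Rn_def by (rule measurable_fun_upd[where J="{..<n}"]) (auto simp: Rn_def)

lemma measurable_fun_upd_Rn_pair:
  assumes "k < n"
  shows "(\<lambda>((y, s), t). (y(k := t), s)) \<in> measurable ((Rn n \<Otimes>\<^sub>M \<mu>) \<Otimes>\<^sub>M lborel) (Rn n \<Otimes>\<^sub>M \<mu>)"
proof -
  have "(\<lambda>w. (fst (fst w))(k := snd w)) \<in> measurable ((Rn n \<Otimes>\<^sub>M \<mu>) \<Otimes>\<^sub>M lborel) (Rn n)"
    unfolding Rn_def by (rule measurable_fun_upd[where J="{..<n}"]) (use assms in auto)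
  then show ?thesis
    by (simp add: case_prod_beta')
qed

lemma measurable_fun_upd_Rn_left:
  assumes "k < n" "x \<in> space (Rn n)"
  shows "(\<lambda>(t, s). (x(k := t), s)) \<in> measurable (lborel \<Otimes>\<^sub>M \<mu>) (Rn n \<Otimes>\<^sub>M \<mu>)"
proof -
  have "(\<lambda>w. x(k := fst w)) \<in> measurable (lborel \<Otimes>\<^sub>M \<mu>) (Rn n)"
    unfolding Rn_def by (rule measurable_fun_upd[where J="{..<n}"]) (use assms in \<open>auto simp: Rn_def\<close>)
  then show ?thesis
    by (simp add: case_prod_beta')
qed

lemma emixpart_cong_coords:
  "(\<And>i. k \<le> i \<Longrightarrow> x i = y i) \<Longrightarrow> emixpart p k G x = emixpart p k G y"
proof (induction k arbitrary: x y)
  case 0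
  then have "x = y" by auto
  then show ?case by simp
next
  case (Suc k)
  have "emixpart p k G (x(k := t)) = emixpart p k G (y(k := t))" for t
    by (rule Suc.IH) (use Suc.prems in auto)
  then show ?case by simp
qed

lemma borel_measurable_emixpart_pair:
  assumes F_meas: "(\<lambda>(y, s). F y s) \<in> borel_measurable (Rn n \<Otimes>\<^sub>M \<mu>)" and "k \<le> n"
  shows "(\<lambda>(y, s). emixpart p k (\<lambda>z. F z s) y) \<in> borel_measurable (Rn n \<Otimes>\<^sub>M \<mu>)"
  using assms(2)
proof (induction k)
  case 0
  then show ?case using F_meas by simp
next
  case (Suc k)
  then have "k < n" by simp
  from measurable_compose[OF measurable_fun_upd_Rn_pair[OF this] Suc.IH]
  have "(\<lambda>(ys, t). epowr (emixpart p k (\<lambda>z. F z (snd ys)) ((fst ys)(k := t))) (p k))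
      \<in> borel_measurable ((Rn n \<Otimes>\<^sub>M \<mu>) \<Otimes>\<^sub>M lborel)"
    using Suc.prems by (simp add: case_prod_beta')
  then have "(\<lambda>ys. \<integral>\<^sup>+t. epowr (emixpart p k (\<lambda>z. F z (snd ys)) ((fst ys)(k := t))) (p k) \<partial>lborel)
      \<in> borel_measurable (Rn n \<Otimes>\<^sub>M \<mu>)"
    by (rule lborel.borel_measurable_nn_integral)
  then show ?case
    by (simp add: case_prod_beta')
qed

lemma borel_measurable_emixpart:
  assumes "G \<in> borel_measurable (Rn n)" and "k \<le> n"
  shows "emixpart p k G \<in> borel_measurable (Rn n)"
proof -
  have "(\<lambda>(y, s::real). G y) \<in> borel_measurable (Rn n \<Otimes>\<^sub>M lborel)"
    using assms(1) by measurable
  from borel_measurable_emixpart_pair[OF this assms(2), of p]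
  have "(\<lambda>(y, s::real). emixpart p k G y) \<in> borel_measurable (Rn n \<Otimes>\<^sub>M lborel)"
    by simp
  from measurable_compose[OF _ this, of "\<lambda>y. (y, 0)"] show ?thesis
    by simp
qed

text \<open>Integration in each variable ignores the hyperplane where that variable vanishes, so
G <= G' is only needed where no coordinate is zero.\<close>

lemma emixpart_mono_nonzero:
  assumes p: "\<forall>i<n. p i > 0" and "k \<le> n" and x: "x \<in> space (Rn n)"
    and "\<forall>i. k \<le> i \<and> i < n \<longrightarrow> x i \<noteq> 0"
    and le: "\<And>y. y \<in> space (Rn n) \<Longrightarrow> \<forall>i<n. y i \<noteq> 0 \<Longrightarrow> G y \<le> G' y"
  shows "emixpart p k G x \<le> emixpart p k G' x"
  using assms(2-4)
proof (induction k arbitrary: x)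
  case 0
  then show ?case using le by simp
next
  case (Suc k)
  have kn: "k < n" using Suc by simp
  have "AE t in lborel. epowr (emixpart p k G (x(k := t))) (p k) \<le> epowr (emixpart p k G' (x(k := t))) (p k)"
    using AE_lborel_singleton[of 0]
  proof eventually_elim
    case (elim t)
    have "emixpart p k G (x(k := t)) \<le> emixpart p k G' (x(k := t))"
      by (rule Suc.IH[OF _ fun_upd_in_space_Rn[OF Suc.prems(2) kn]]) (use Suc.prems kn elim in auto)
    then show ?case using p kn by (intro epowr_mono) auto
  qed
  then show ?case
    using p kn by (simp add: epowr_mono nn_integral_mono_AE)
qed

lemma emixnorm_mono_nonzero:
  assumes "\<forall>i<n. p i > 0" and "\<And>y. y \<in> space (Rn n) \<Longrightarrow> \<forall>i<n. y i \<noteq> 0 \<Longrightarrow> G y \<le> G' y"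
  shows "emixnorm n p G \<le> emixnorm n p G'"
  unfolding emixnorm_def using assms by (intro emixpart_mono_nonzero) (auto simp: undefined_in_space_Rn)

lemma emixnorm_cong_space:
  assumes "\<forall>i<n. p i > 0" and "\<And>y. y \<in> space (Rn n) \<Longrightarrow> G y = G' y"
  shows "emixnorm n p G = emixnorm n p G'"
  using assms by (intro antisym emixnorm_mono_nonzero) auto

lemma emixpart_zero: "\<forall>i<k. p i > 0 \<Longrightarrow> emixpart p k (\<lambda>_. 0) x = 0"
  by (induction k arbitrary: x) auto

lemma emixpart_cmult:
  assumes p: "\<forall>i<k. p i > 0" and c: "c \<ge> 0" and [measurable]: "G \<in> borel_measurable (Rn n)"
    and "k \<le> n" and "x \<in> space (Rn n)"
  shows "emixpart p k (\<lambda>y. ennreal c * G y) x = ennreal c * emixpart p k G x"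
  using assms(1,4,5)
proof (induction k arbitrary: x)
  case 0
  then show ?case by simp
next
  case (Suc k)
  have pk: "p k > 0" and kn: "k < n"
    using Suc.prems by auto
  have [measurable]: "emixpart p k G \<in> borel_measurable (Rn n)"
    using kn by (intro borel_measurable_emixpart) auto
  have "emixpart p k (\<lambda>y. ennreal c * G y) (x(k := t)) = ennreal c * emixpart p k G (x(k := t))" for t
    by (rule Suc.IH[OF _ _ fun_upd_in_space_Rn[OF Suc.prems(3) kn]]) (use Suc.prems kn in auto)
  then have "emixpart p (Suc k) (\<lambda>y. ennreal c * G y) x
     = epowr (ennreal (c powr p k) * (\<integral>\<^sup>+t. epowr (emixpart p k G (x(k := t))) (p k) \<partial>lborel)) (1 / p k)"
    using pk c Suc.prems kn by (simp add: epowr_cmult nn_integral_cmult)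
  also have "\<dots> = ennreal c * emixpart p (Suc k) G x"
    using pk c by (simp add: epowr_cmult powr_powr)
  finally show ?case .
qed

lemma emixpart_nn_integral_le:
  assumes p: "\<forall>i<n. p i > 1" and sf: "sigma_finite_measure \<mu>"
    and F_meas: "(\<lambda>(y, s). F y s) \<in> borel_measurable (Rn n \<Otimes>\<^sub>M \<mu>)"
    and "k \<le> n" and "x \<in> space (Rn n)"
  shows "emixpart p k (\<lambda>y. \<integral>\<^sup>+s. F y s \<partial>\<mu>) x \<le> (\<integral>\<^sup>+s. emixpart p k (\<lambda>y. F y s) x \<partial>\<mu>)"
  using assms(4,5)
proof (induction k arbitrary: x)
  case 0
  then show ?case by simp
next
  case (Suc k)
  have kn: "k < n" and pk: "p k > 1"
    using Suc p by auto
  have "emixpart p (Suc k) (\<lambda>y. \<integral>\<^sup>+s. F y s \<partial>\<mu>) x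
     \<le> epowr (\<integral>\<^sup>+t. epowr (\<integral>\<^sup>+s. emixpart p k (\<lambda>y. F y s) (x(k := t)) \<partial>\<mu>) (p k) \<partial>lborel) (1 / p k)"
    unfolding emixpart.simps using pk Suc.IH Suc.prems kn fun_upd_in_space_Rn
    by (intro epowr_mono nn_integral_mono) auto
  also have "\<dots> \<le> (\<integral>\<^sup>+s. epowr (\<integral>\<^sup>+t. epowr (emixpart p k (\<lambda>y. F y s) (x(k := t))) (p k) \<partial>lborel) (1 / p k) \<partial>\<mu>)"
  proof (rule nn_integral_Minkowski[OF pk sf])
    from measurable_compose[OF measurable_fun_upd_Rn_left[OF kn Suc.prems(2)]
        borel_measurable_emixpart_pair[OF F_meas, of k p]]
    show "(\<lambda>(t, s). emixpart p k (\<lambda>y. F y s) (x(k := t))) \<in> borel_measurable (lborel \<Otimes>\<^sub>M \<mu>)"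
      using kn by (simp add: case_prod_beta')
  qed
  also have "\<dots> = (\<integral>\<^sup>+s. emixpart p (Suc k) (\<lambda>y. F y s) x \<partial>\<mu>)"
    by simp
  finally show ?case .
qed

lemma emixnorm_nn_integral_le:
  assumes "\<forall>i<n. p i > 1" and "sigma_finite_measure \<mu>"
    and "(\<lambda>(y, s). F y s) \<in> borel_measurable (Rn n \<Otimes>\<^sub>M \<mu>)"
  shows "emixnorm n p (\<lambda>y. \<integral>\<^sup>+s. F y s \<partial>\<mu>) \<le> (\<integral>\<^sup>+s. emixnorm n p (\<lambda>y. F y s) \<partial>\<mu>)"
  unfolding emixnorm_def using assms by (intro emixpart_nn_integral_le) (auto simp: undefined_in_space_Rn)

lemma emixnorm_suminf_le:
  assumes p: "\<forall>i<n. p i > 1" and [measurable]: "\<And>k. F k \<in> borel_measurable (Rn n)"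
  shows "emixnorm n p (\<lambda>y. \<Sum>k. F k y) \<le> (\<Sum>k. emixnorm n p (F k))"
proof -
  have "(\<lambda>w. F (snd w) (fst w)) \<in> borel_measurable (Rn n \<Otimes>\<^sub>M count_space UNIV)"
    by (rule measurable_compose_countable'[where I=UNIV]) auto
  then have "(\<lambda>(y, k). F k y) \<in> borel_measurable (Rn n \<Otimes>\<^sub>M count_space UNIV)"
    by (simp add: case_prod_beta')
  then have "emixnorm n p (\<lambda>y. \<integral>\<^sup>+k. F k y \<partial>count_space UNIV)
      \<le> (\<integral>\<^sup>+k. emixnorm n p (F k) \<partial>count_space UNIV)"
    using p by (intro emixnorm_nn_integral_le sigma_finite_measure_count_space)
  then show ?thesis
    by (simp add: nn_integral_count_space_nat)
qed

section \<open>Dilations and change of variables\<close>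

definition dilate :: "nat \<Rightarrow> (nat \<Rightarrow> real) \<Rightarrow> (nat \<Rightarrow> real) \<Rightarrow> (nat \<Rightarrow> real)" where
  "dilate n c x = (\<lambda>i. if i < n then c i * x i else x i)"

lemma dilate_in_space_Rn: "x \<in> space (Rn n) \<Longrightarrow> dilate n c x \<in> space (Rn n)"
  by (auto simp: space_Rn dilate_def)

lemma dilate_fun_upd: "k < n \<Longrightarrow> dilate n c (x(k := t)) = (dilate n c x)(k := c k * t)"
  by (auto simp: dilate_def)

lemma dilate_commute: "x \<in> space (Rn n) \<Longrightarrow> s \<in> space (Rn n) \<Longrightarrow> dilate n x s = dilate n s x"
  by (auto simp: dilate_def space_Rn fun_eq_iff)

lemma measurable_dilate [measurable]: "dilate n c \<in> measurable (Rn n) (Rn n)"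
  unfolding Rn_def dilate_def
  by (rule measurable_PiM_single') (auto simp: space_PiM PiE_def extensional_def)

lemma measurable_dilate_pair [measurable]:
  "(\<lambda>w. dilate n (snd w) (fst w)) \<in> measurable (Rn n \<Otimes>\<^sub>M Rn n) (Rn n)"
  unfolding Rn_def dilate_def
  apply (rule measurable_PiM_single')
  subgoal for i
    by (cases "i < n") simp_all
  by (auto simp: space_pair_measure space_PiM PiE_def extensional_def)

lemma nn_integral_lborel_mult_scale:
  fixes c :: real
  assumes [measurable]: "f \<in> borel_measurable borel" and c: "c \<noteq> 0"
  shows "(\<integral>\<^sup>+t. f (c * t) \<partial>lborel) = ennreal (1 / \<bar>c\<bar>) * (\<integral>\<^sup>+x. f x \<partial>lborel)"
proof -
  have "ennreal (1 / \<bar>c\<bar>) * (\<integral>\<^sup>+x. f x \<partial>lborel)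
      = ennreal (1 / \<bar>c\<bar>) * ennreal \<bar>c\<bar> * (\<integral>\<^sup>+t. f (c * t) \<partial>lborel)"
    using nn_integral_real_affine[OF assms, of 0] by (simp add: mult.assoc)
  also have "ennreal (1 / \<bar>c\<bar>) * ennreal \<bar>c\<bar> = 1"
    using c by (simp add: ennreal_mult'[symmetric])
  finally show ?thesis by simp
qed

lemma emixpart_dilate:
  assumes p: "\<forall>i<n. p i > 0" and c: "\<forall>i<n. c i \<noteq> 0"
    and G_meas [measurable]: "G \<in> borel_measurable (Rn n)" and "k \<le> n" and "x \<in> space (Rn n)"
  shows "emixpart p k (\<lambda>y. G (dilate n c y)) x
       = ennreal (\<Prod>i<k. \<bar>c i\<bar> powr (- 1 / p i)) * emixpart p k G (dilate n c x)"
  using assms(4,5)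
proof (induction k arbitrary: x)
  case 0
  then show ?case by simp
next
  case (Suc k)
  have kn: "k < n" and pk: "p k > 0" "c k \<noteq> 0"
    using Suc p c by auto
  define K where "K = (\<Prod>i<k. \<bar>c i\<bar> powr (- 1 / p i))"
  have K: "K > 0"
    using c kn by (auto simp: K_def intro!: prod_pos)
  define \<phi> where "\<phi> u = epowr (emixpart p k G ((dilate n c x)(k := u))) (p k)" for u
  have [measurable]: "emixpart p k G \<in> borel_measurable (Rn n)"
    using kn by (intro borel_measurable_emixpart) auto
  have \<phi>_meas: "\<phi> \<in> borel_measurable borel"
    using measurable_fun_upd_Rn[OF dilate_in_space_Rn[OF Suc.prems(2)] kn]
    unfolding \<phi>_def by measurable
  have IH: "emixpart p k (\<lambda>y. G (dilate n c y)) (x(k := t))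
      = ennreal K * emixpart p k G (dilate n c (x(k := t)))" for t
    unfolding K_def by (rule Suc.IH[OF _ fun_upd_in_space_Rn[OF Suc.prems(2) kn]]) (use kn in simp)
  have "(\<integral>\<^sup>+t. epowr (emixpart p k (\<lambda>y. G (dilate n c y)) (x(k := t))) (p k) \<partial>lborel)
      = (\<integral>\<^sup>+t. ennreal (K powr p k) * \<phi> (c k * t) \<partial>lborel)"
    using pk K by (intro nn_integral_cong) (simp add: IH \<phi>_def epowr_cmult dilate_fun_upd[OF kn])
  also have "\<dots> = ennreal (K powr p k / \<bar>c k\<bar>) * (\<integral>\<^sup>+u. \<phi> u \<partial>lborel)"
    using \<phi>_meas pk
    by (simp add: nn_integral_cmult nn_integral_lborel_mult_scale mult.assoc[symmetric] ennreal_mult'[symmetric])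
  finally have "emixpart p (Suc k) (\<lambda>y. G (dilate n c y)) x
      = ennreal ((K powr p k / \<bar>c k\<bar>) powr (1 / p k)) * emixpart p (Suc k) G (dilate n c x)"
    using pk K by (simp add: epowr_cmult \<phi>_def)
  also have "(K powr p k / \<bar>c k\<bar>) powr (1 / p k) = (K powr p k) powr (1 / p k) / \<bar>c k\<bar> powr (1 / p k)"
    using K by (simp add: powr_divide)
  also have "\<dots> = K * \<bar>c k\<bar> powr (- 1 / p k)"
    using K pk by (simp add: powr_powr powr_minus_divide divide_inverse powr_minus)
  finally show ?case
    by (simp add: K_def)
qed

lemma emixnorm_dilate:
  assumes "\<forall>i<n. p i > 0" and "\<forall>i<n. c i \<noteq> 0" and "G \<in> borel_measurable (Rn n)"
  shows "emixnorm n p (\<lambda>y. G (dilate n c y)) = ennreal (\<Prod>i<n. \<bar>c i\<bar> powr (- 1 / p i)) * emixnorm n p G"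
proof -
  have "emixpart p n G (dilate n c (\<lambda>_. undefined)) = emixpart p n G (\<lambda>_. undefined)"
    by (rule emixpart_cong_coords) (simp add: dilate_def)
  then show ?thesis
    unfolding emixnorm_def using assms
    by (subst emixpart_dilate) (auto simp: undefined_in_space_Rn)
qed

lemma measurable_merge_Rn:
  assumes "k \<le> n" "x \<in> space (Rn n)"
  shows "(\<lambda>y i. if i < k then y i else x i) \<in> measurable (PiM {..<k} (\<lambda>_. lborel)) (Rn n)"
  unfolding Rn_def
proof (rule measurable_PiM_single')
  fix i
  show "(\<lambda>y. if i < k then y i else x i) \<in> measurable (PiM {..<k} (\<lambda>_. lborel)) lborel"
    if "i \<in> {..<n}"
    by (cases "i < k") auto
qed (use assms in \<open>auto simp: space_Rn PiE_def extensional_def\<close>)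

lemma emixpart_one_eq_nn_integral_PiM:
  assumes [measurable]: "h \<in> borel_measurable (Rn n)" and "k \<le> n" and "x \<in> space (Rn n)"
  shows "emixpart (\<lambda>_. 1) k h x = (\<integral>\<^sup>+y. h (\<lambda>i. if i < k then y i else x i) \<partial>PiM {..<k} (\<lambda>_. lborel))"
  using assms(2,3)
proof (induction k arbitrary: x)
  case 0
  then show ?case
    by (simp add: PiM_empty nn_integral_count_space_finite)
next
  case (Suc k)
  interpret product_sigma_finite "\<lambda>_. lborel"
    by standard
  have kn: "k < n" using Suc by simp
  have merge: "(\<lambda>i. if i < Suc k then (y(k := t)) i else x i) = (\<lambda>i. if i < k then y i else (x(k := t)) i)"
    for y t by (auto simp: fun_eq_iff)
  have h_meas: "(\<lambda>z. h (\<lambda>i. if i < Suc k then z i else x i)) \<in> borel_measurable (PiM (insert k {..<k}) (\<lambda>_. lborel))"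
    using measurable_compose[OF measurable_merge_Rn[OF Suc.prems] assms(1)] by (simp add: lessThan_Suc)
  have "(\<integral>\<^sup>+y. h (\<lambda>i. if i < Suc k then y i else x i) \<partial>PiM (insert k {..<k}) (\<lambda>_. lborel))
      = (\<integral>\<^sup>+t. (\<integral>\<^sup>+y. h (\<lambda>i. if i < k then y i else (x(k := t)) i) \<partial>PiM {..<k} (\<lambda>_. lborel)) \<partial>lborel)"
    unfolding merge[symmetric] by (rule product_nn_integral_insert_rev[OF _ _ h_meas]) auto
  also have "\<dots> = emixpart (\<lambda>_. 1) (Suc k) h x"
  proof -
    have "emixpart (\<lambda>_. 1) k h (x(k := t))
        = (\<integral>\<^sup>+y. h (\<lambda>i. if i < k then y i else (x(k := t)) i) \<partial>PiM {..<k} (\<lambda>_. lborel))" for t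
      by (rule Suc.IH[OF _ fun_upd_in_space_Rn[OF Suc.prems(2) kn]]) (use kn in simp)
    then show ?thesis
      by (simp only: emixpart.simps epowr_one div_by_1)
  qed
  finally show ?case
    by (simp add: lessThan_Suc)
qed

lemma nn_integral_Rn_eq_emixnorm:
  assumes [measurable]: "h \<in> borel_measurable (Rn n)"
  shows "(\<integral>\<^sup>+y. h y \<partial>Rn n) = emixnorm n (\<lambda>_. 1) h"
proof -
  have "emixnorm n (\<lambda>_. 1) h = (\<integral>\<^sup>+y. h (\<lambda>i. if i < n then y i else undefined) \<partial>PiM {..<n} (\<lambda>_. lborel))"
    unfolding emixnorm_def by (rule emixpart_one_eq_nn_integral_PiM) (auto simp: undefined_in_space_Rn)
  also have "\<dots> = (\<integral>\<^sup>+y. h y \<partial>Rn n)"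
    unfolding Rn_def
    by (rule nn_integral_cong) (auto simp: space_PiM PiE_def extensional_def intro!: arg_cong[where f=h])
  finally show ?thesis by simp
qed

lemma nn_integral_Rn_dilate:
  assumes c: "\<forall>i<n. c i \<noteq> 0" and [measurable]: "h \<in> borel_measurable (Rn n)"
  shows "(\<integral>\<^sup>+y. h (dilate n c y) \<partial>Rn n) = ennreal (\<Prod>i<n. 1 / \<bar>c i\<bar>) * (\<integral>\<^sup>+y. h y \<partial>Rn n)"
proof -
  have "(\<Prod>i<n. \<bar>c i\<bar> powr (- 1 / 1)) = (\<Prod>i<n. 1 / \<bar>c i\<bar>)"
    using c by (intro prod.cong) (auto simp: powr_minus_divide)
  then show ?thesis
    using c by (simp add: nn_integral_Rn_eq_emixnorm emixnorm_dilate)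
qed

lemma AE_Rn_coords_nonzero: "AE s in Rn n. \<forall>i<n. s i \<noteq> 0"
proof (rule AE_I')
  define Z where "Z = {s \<in> space (Rn n). \<exists>i<n. s i = 0}"
  have "Z = (\<Union>i<n. {s \<in> space (Rn n). s i = 0})"
    unfolding Z_def by auto
  also have "\<dots> \<in> sets (Rn n)"
    unfolding Rn_def by measurable
  finally have [measurable]: "Z \<in> sets (Rn n)" .
  have "emeasure (Rn n) Z = emixnorm n (\<lambda>_. 1) (indicator Z)"
    by (simp flip: nn_integral_Rn_eq_emixnorm)
  also have "\<dots> \<le> emixnorm n (\<lambda>_. 1) (\<lambda>_. 0)"
    by (rule emixnorm_mono_nonzero) (auto simp: Z_def)
  also have "\<dots> = 0"
    by (simp add: emixnorm_def emixpart_zero)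
  finally show "Z \<in> null_sets (Rn n)"
    by auto
  show "{s \<in> space (Rn n). \<not> (\<forall>i<n. s i \<noteq> 0)} \<subseteq> Z"
    by (auto simp: Z_def)
qed

lemma nn_integral_Rn_le_dilate:
  assumes x: "x \<in> space (Rn n)" "\<forall>i<n. x i \<noteq> 0" and [measurable]: "h \<in> borel_measurable (Rn n)"
    and le: "\<And>s. s \<in> space (Rn n) \<Longrightarrow> \<forall>i<n. s i \<noteq> 0 \<Longrightarrow>
               ennreal (\<Prod>i<n. \<bar>x i\<bar>) * h (dilate n s x) \<le> K s"
  shows "(\<integral>\<^sup>+t. h t \<partial>Rn n) \<le> (\<integral>\<^sup>+s. K s \<partial>Rn n)"
proof -
  have "ennreal (\<Prod>i<n. \<bar>x i\<bar>) * ennreal (\<Prod>i<n. 1 / \<bar>x i\<bar>) = 1"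
    using x(2) by (simp add: ennreal_mult'[symmetric] prod_nonneg prod.distrib[symmetric])
  then have "(\<integral>\<^sup>+t. h t \<partial>Rn n) = ennreal (\<Prod>i<n. \<bar>x i\<bar>) * (\<integral>\<^sup>+s. h (dilate n x s) \<partial>Rn n)"
    using x(2) by (simp add: nn_integral_Rn_dilate mult.assoc[symmetric])
  also have "\<dots> = (\<integral>\<^sup>+s. ennreal (\<Prod>i<n. \<bar>x i\<bar>) * h (dilate n x s) \<partial>Rn n)"
    by (simp add: nn_integral_cmult)
  also have "\<dots> = (\<integral>\<^sup>+s. ennreal (\<Prod>i<n. \<bar>x i\<bar>) * h (dilate n s x) \<partial>Rn n)"
    using x(1) by (intro nn_integral_cong) (simp add: dilate_commute)
  also have "\<dots> \<le> (\<integral>\<^sup>+s. K s \<partial>Rn n)"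
  proof (rule nn_integral_mono_AE)
    show "AE s in Rn n. ennreal (\<Prod>i<n. \<bar>x i\<bar>) * h (dilate n s x) \<le> K s"
      using AE_Rn_coords_nonzero[of n] AE_space[of "Rn n"] by eventually_elim (rule le)
  qed
  finally show ?thesis .
qed

section \<open>Averages of dilates\<close>

definition hardy_kernel :: "real \<Rightarrow> real \<Rightarrow> real \<Rightarrow> real" where
  "hardy_kernel e q u = min e (1 / \<bar>u\<bar>) * \<bar>u\<bar> powr (- 1 / q)"

definition hardy_const :: "real \<Rightarrow> ennreal" where
  "hardy_const q = (\<integral>\<^sup>+u. ennreal (hardy_kernel 1 q u) \<partial>lborel)"

definition dilation_weight :: "nat \<Rightarrow> real \<Rightarrow> (nat \<Rightarrow> real) \<Rightarrow> real" where
  "dilation_weight n e s = (\<Prod>i<n. min e (1 / \<bar>s i\<bar>))"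

lemma hardy_kernel_nonneg: "e \<ge> 0 \<Longrightarrow> hardy_kernel e q u \<ge> 0"
  by (simp add: hardy_kernel_def)

lemma borel_measurable_hardy_kernel [measurable]: "hardy_kernel e q \<in> borel_measurable borel"
  unfolding hardy_kernel_def by measurable

lemma dilation_weight_nonneg: "e \<ge> 0 \<Longrightarrow> dilation_weight n e s \<ge> 0"
  unfolding dilation_weight_def by (intro prod_nonneg) auto

lemma borel_measurable_dilation_weight [measurable]: "dilation_weight n e \<in> borel_measurable (Rn n)"
  unfolding dilation_weight_def Rn_def by measurable

lemma nn_integral_powr_near_0_and_infinity_finite:
  assumes q: "q > 1"
  shows "(\<integral>\<^sup>+u. ennreal (indicator {0..1} u * u powr (- 1 / q) + indicator {1..} u * u powr (- 1 - 1 / q)) \<partial>lborel) < top"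
proof -
  have "((\<lambda>u. u powr (- 1 / q)) has_integral (1 powr (- 1 / q + 1) / (- 1 / q + 1))) {0..1}"
    by (rule has_integral_powr_from_0) (use q in auto)
  then have I0: "(\<integral>\<^sup>+u. ennreal (u powr (- 1 / q)) * indicator {0..1} u \<partial>lborel) < top"
    by (subst nn_integral_has_integral_lebesgue') auto
  have "((\<lambda>u. u powr (- 1 - 1 / q)) has_integral (- (1 powr (- 1 - 1 / q + 1)) / (- 1 - 1 / q + 1))) {1..}"
    by (rule has_integral_powr_to_inf) (use q in auto)
  then have I1: "(\<integral>\<^sup>+u. ennreal (u powr (- 1 - 1 / q)) * indicator {1..} u \<partial>lborel) < top"
    by (subst nn_integral_has_integral_lebesgue') auto
  have "(\<integral>\<^sup>+u. ennreal (indicator {0..1} u * u powr (- 1 / q) + indicator {1..} u * u powr (- 1 - 1 / q)) \<partial>lborel)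
      = (\<integral>\<^sup>+u. ennreal (u powr (- 1 / q)) * indicator {0..1} u + ennreal (u powr (- 1 - 1 / q)) * indicator {1..} u \<partial>lborel)"
    by (intro nn_integral_cong) (auto simp: indicator_def)
  also have "\<dots> = (\<integral>\<^sup>+u. ennreal (u powr (- 1 / q)) * indicator {0..1} u \<partial>lborel)
                 + (\<integral>\<^sup>+u. ennreal (u powr (- 1 - 1 / q)) * indicator {1..} u \<partial>lborel)"
    by (rule nn_integral_add) auto
  also have "\<dots> < top"
    using I0 I1 by simp
  finally show ?thesis .
qed

lemma hardy_const_finite:
  assumes q: "q > 1"
  shows "hardy_const q < top"
proof -
  define g where "g u = indicator {0..1} u * u powr (- 1 / q) + indicator {1..} u * u powr (- 1 - 1 / q)" for u :: real
  have g_nonneg: "g u \<ge> 0" for u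
    by (auto simp: g_def indicator_def)
  have [measurable]: "g \<in> borel_measurable borel"
    unfolding g_def by measurable
  have "hardy_kernel 1 q u \<le> g u + g (- u)" for u
  proof -
    consider "u = 0" | "\<bar>u\<bar> \<le> 1" "u \<noteq> 0" | "\<bar>u\<bar> > 1"
      by linarith
    then have "hardy_kernel 1 q u \<le> g \<bar>u\<bar>"
    proof cases
      case 3
      have "hardy_kernel 1 q u = \<bar>u\<bar> powr (- 1) * \<bar>u\<bar> powr (- 1 / q)"
        using 3 by (simp add: hardy_kernel_def min_def powr_minus_divide)
      also have "\<dots> = \<bar>u\<bar> powr (- 1 - 1 / q)"
        by (simp only: powr_add[symmetric]) (simp add: algebra_simps)
      finally show ?thesis
        using 3 by (simp add: g_def)
    qed (auto simp: hardy_kernel_def g_def min_def field_simps)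
    also have "g \<bar>u\<bar> \<le> g u + g (- u)"
      using g_nonneg[of u] g_nonneg[of "- u"] by (cases "u \<ge> 0") auto
    finally show ?thesis .
  qed
  then have "hardy_const q \<le> (\<integral>\<^sup>+u. ennreal (g u) + ennreal (g (- u)) \<partial>lborel)"
    unfolding hardy_const_def using g_nonneg
    by (intro nn_integral_mono) (simp add: ennreal_plus[symmetric] del: ennreal_plus)
  also have "\<dots> = (\<integral>\<^sup>+u. ennreal (g u) \<partial>lborel) + (\<integral>\<^sup>+u. ennreal (g (- u)) \<partial>lborel)"
    by (rule nn_integral_add) auto
  also have "(\<integral>\<^sup>+u. ennreal (g (- u)) \<partial>lborel) = (\<integral>\<^sup>+u. ennreal (g u) \<partial>lborel)"
    using nn_integral_lborel_mult_scale[of "\<lambda>u. ennreal (g u)" "-1"] by simp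
  also have "(\<integral>\<^sup>+u. ennreal (g u) \<partial>lborel) + (\<integral>\<^sup>+u. ennreal (g u) \<partial>lborel) < top"
    using nn_integral_powr_near_0_and_infinity_finite[OF q] by (simp add: g_def)
  finally show ?thesis .
qed

lemma prod_hardy_const_eq_ennreal:
  assumes "\<forall>i<n. p i > 1"
  shows "(\<Prod>i<n. hardy_const (p i)) = ennreal (\<Prod>i<n. enn2real (hardy_const (p i)))"
proof -
  have "(\<Prod>i<n. hardy_const (p i)) = (\<Prod>i<n. ennreal (enn2real (hardy_const (p i))))"
    using assms hardy_const_finite by (intro prod.cong) (auto simp: ennreal_enn2real_if less_top)
  then show ?thesis
    by (simp add: prod_ennreal)
qed

lemma nn_integral_hardy_kernel:
  assumes e: "e > 0" and q: "q > 0"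
  shows "(\<integral>\<^sup>+u. ennreal (hardy_kernel e q u) \<partial>lborel) = ennreal (e powr (1 / q)) * hardy_const q"
proof -
  have "hardy_kernel e q u = e powr (1 + 1 / q) * hardy_kernel 1 q (e * u)" for u
  proof (cases "u = 0")
    case False
    have "hardy_kernel 1 q (e * u) = min 1 (1 / (e * \<bar>u\<bar>)) * (e * \<bar>u\<bar>) powr (- 1 / q)"
      using e by (simp add: hardy_kernel_def abs_mult)
    also have "min 1 (1 / (e * \<bar>u\<bar>)) = min e (1 / \<bar>u\<bar>) / e"
      using e False by (simp add: min_def field_simps)
    also have "(e * \<bar>u\<bar>) powr (- 1 / q) = e powr (- 1 / q) * \<bar>u\<bar> powr (- 1 / q)"
      using e by (simp add: powr_mult)
    finally have "e powr (1 + 1 / q) * hardy_kernel 1 q (e * u)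
        = hardy_kernel e q u * (e powr (1 + 1 / q) * e powr (- 1 / q) / e)"
      by (simp add: hardy_kernel_def)
    also have "e powr (1 + 1 / q) * e powr (- 1 / q) / e = 1"
      using e by (simp add: powr_add[symmetric])
    finally show ?thesis by simp
  qed (simp add: hardy_kernel_def)
  then have "(\<integral>\<^sup>+u. ennreal (hardy_kernel e q u) \<partial>lborel)
      = ennreal (e powr (1 + 1 / q)) * (ennreal (1 / e) * hardy_const q)"
    using e nn_integral_lborel_mult_scale[of "\<lambda>u. ennreal (hardy_kernel 1 q u)" e]
    by (simp add: hardy_const_def ennreal_mult hardy_kernel_nonneg nn_integral_cmult)
  also have "\<dots> = (ennreal (e powr (1 + 1 / q)) * ennreal (1 / e)) * hardy_const q"
    by (simp add: mult.assoc)
  also have "ennreal (e powr (1 + 1 / q)) * ennreal (1 / e) = ennreal (e powr (1 + 1 / q) * (1 / e))"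
    by (rule ennreal_mult'[symmetric]) simp
  also have "e powr (1 + 1 / q) * (1 / e) = e powr (1 / q)"
    using e by (simp add: powr_add)
  finally show ?thesis .
qed

lemma emixnorm_weighted_dilate:
  assumes p: "\<forall>i<n. p i > 0" and e: "e \<ge> 0" and s: "\<forall>i<n. s i \<noteq> 0"
    and [measurable]: "G \<in> borel_measurable (Rn n)"
  shows "emixnorm n p (\<lambda>y. ennreal (dilation_weight n e s) * G (dilate n s y))
     = ennreal (\<Prod>i<n. hardy_kernel e (p i) (s i)) * emixnorm n p G"
proof -
  have "emixnorm n p (\<lambda>y. ennreal (dilation_weight n e s) * G (dilate n s y))
      = ennreal (dilation_weight n e s) * emixnorm n p (\<lambda>y. G (dilate n s y))"
    unfolding emixnorm_def using p e dilation_weight_nonneg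
    by (intro emixpart_cmult[where n=n]) (auto simp: undefined_in_space_Rn)
  also have "\<dots> = ennreal (dilation_weight n e s * (\<Prod>i<n. \<bar>s i\<bar> powr (- 1 / p i))) * emixnorm n p G"
    using p s e dilation_weight_nonneg[of e n s]
    by (simp add: emixnorm_dilate ennreal_mult prod_nonneg mult.assoc)
  also have "dilation_weight n e s * (\<Prod>i<n. \<bar>s i\<bar> powr (- 1 / p i)) = (\<Prod>i<n. hardy_kernel e (p i) (s i))"
    by (simp add: dilation_weight_def hardy_kernel_def prod.distrib)
  finally show ?thesis .
qed

text \<open>By Minkowski's inequality and the homogeneity of the mixed norm, the integral over s
factorises into one-dimensional integrals of \<^const>\<open>hardy_kernel\<close>.\<close>

lemma emixnorm_dilation_average_le:
  assumes p: "\<forall>i<n. p i > 1" and e: "e > 0" and [measurable]: "G \<in> borel_measurable (Rn n)"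
  shows "emixnorm n p (\<lambda>x. \<integral>\<^sup>+s. ennreal (dilation_weight n e s) * G (dilate n s x) \<partial>Rn n)
     \<le> (\<Prod>i<n. ennreal (e powr (1 / p i)) * hardy_const (p i)) * emixnorm n p G"
proof -
  have p0: "\<forall>i<n. p i > 0"
    using p by auto
  have "(\<lambda>w. G (dilate n (snd w) (fst w))) \<in> borel_measurable (Rn n \<Otimes>\<^sub>M Rn n)"
    by measurable
  then have "emixnorm n p (\<lambda>x. \<integral>\<^sup>+s. ennreal (dilation_weight n e s) * G (dilate n s x) \<partial>Rn n)
      \<le> (\<integral>\<^sup>+s. emixnorm n p (\<lambda>y. ennreal (dilation_weight n e s) * G (dilate n s y)) \<partial>Rn n)"
    by (intro emixnorm_nn_integral_le p sigma_finite_Rn) (simp add: case_prod_beta')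
  also have "\<dots> = (\<integral>\<^sup>+s. ennreal (\<Prod>i<n. hardy_kernel e (p i) (s i)) * emixnorm n p G \<partial>Rn n)"
  proof (rule nn_integral_cong_AE)
    show "AE s in Rn n. emixnorm n p (\<lambda>y. ennreal (dilation_weight n e s) * G (dilate n s y))
        = ennreal (\<Prod>i<n. hardy_kernel e (p i) (s i)) * emixnorm n p G"
      using AE_Rn_coords_nonzero[of n] by eventually_elim (simp add: emixnorm_weighted_dilate p0 e less_imp_le)
  qed
  also have "\<dots> = (\<integral>\<^sup>+s. (\<Prod>i<n. ennreal (hardy_kernel e (p i) (s i))) \<partial>Rn n) * emixnorm n p G"
    using e by (simp add: nn_integral_multc prod_ennreal hardy_kernel_nonneg Rn_def)
  also have "(\<integral>\<^sup>+s. (\<Prod>i<n. ennreal (hardy_kernel e (p i) (s i))) \<partial>Rn n)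
      = (\<Prod>i<n. \<integral>\<^sup>+u. ennreal (hardy_kernel e (p i) u) \<partial>lborel)"
  proof -
    interpret product_sigma_finite "\<lambda>_. lborel"
      by standard
    show ?thesis
      unfolding Rn_def by (rule product_nn_integral_prod) auto
  qed
  also have "\<dots> = (\<Prod>i<n. ennreal (e powr (1 / p i)) * hardy_const (p i))"
    using e p0 by (intro prod.cong) (auto simp: nn_integral_hardy_kernel)
  finally show ?thesis .
qed

lemma borel_measurable_dilation_average [measurable]:
  assumes [measurable]: "g \<in> borel_measurable (Rn n)"
  shows "(\<lambda>x. \<integral>\<^sup>+s. ennreal (dilation_weight n e s) * g (dilate n s x) \<partial>Rn n) \<in> borel_measurable (Rn n)"
proof -
  interpret sigma_finite_measure "Rn n"
    by (rule sigma_finite_Rn)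
  have "(\<lambda>w. ennreal (dilation_weight n e (snd w)) * g (dilate n (snd w) (fst w)))
      \<in> borel_measurable (Rn n \<Otimes>\<^sub>M Rn n)"
    by measurable
  then show ?thesis
    by (intro borel_measurable_nn_integral) (simp add: case_prod_beta')
qed

lemma prod_abs_div_le_dilation_weight:
  assumes \<rho>: "\<rho> > 0" and s: "\<forall>i<n. s i \<noteq> 0"
    and x: "\<forall>i<n. \<bar>x i\<bar> \<le> e * \<rho>" and sx: "\<forall>i<n. \<bar>s i\<bar> * \<bar>x i\<bar> \<le> \<rho>"
  shows "(\<Prod>i<n. \<bar>x i\<bar> / \<rho>) \<le> dilation_weight n e s"
  unfolding dilation_weight_def
proof (rule prod_mono)
  fix i assume "i \<in> {..<n}"
  then show "0 \<le> \<bar>x i\<bar> / \<rho> \<and> \<bar>x i\<bar> / \<rho> \<le> min e (1 / \<bar>s i\<bar>)"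
    using \<rho> s x sx by (auto simp: field_simps)
qed

section \<open>Euclidean balls\<close>

lemma abs_le_enorm:
  assumes "i < n"
  shows "\<bar>x i\<bar> \<le> enorm n x"
proof -
  have "(x i)\<^sup>2 \<le> (\<Sum>j<n. (x j)\<^sup>2)"
    using assms by (intro member_le_sum) auto
  then show ?thesis
    unfolding enorm_def using real_sqrt_le_mono by fastforce
qed

lemma enorm_pos: "n \<ge> 1 \<Longrightarrow> \<forall>i<n. x i \<noteq> 0 \<Longrightarrow> enorm n x > 0"
  using abs_le_enorm[of 0 n x] by auto

lemma enorm_dilate_const:
  assumes "c \<ge> 0"
  shows "enorm n (dilate n (\<lambda>_. c) y) = c * enorm n y"
proof -
  have "(\<Sum>i<n. (dilate n (\<lambda>_. c) y i)\<^sup>2) = c\<^sup>2 * (\<Sum>i<n. (y i)\<^sup>2)"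
    by (simp add: dilate_def sum_distrib_left power_mult_distrib)
  then show ?thesis
    using assms by (simp add: enorm_def real_sqrt_mult)
qed

lemma abs_mult_le_enorm_dilate: "i < n \<Longrightarrow> \<bar>s i\<bar> * \<bar>x i\<bar> \<le> enorm n (dilate n s x)"
  using abs_le_enorm[of i n "dilate n s x"] by (simp add: dilate_def abs_mult)

lemma borel_measurable_enorm [measurable]: "enorm n \<in> borel_measurable (Rn n)"
  unfolding enorm_def Rn_def by measurable

lemma ball0_in_sets [measurable]: "ball0 n r \<in> sets (Rn n)"
  unfolding ball0_def by measurable

lemma borel_measurable_indic_ball [measurable]: "indic_ball n r \<in> borel_measurable (Rn n)"
  unfolding indic_ball_def by measurable

lemma dilate_2_in_ball0_iff: "y \<in> space (Rn n) \<Longrightarrow> dilate n (\<lambda>_. 2) y \<in> ball0 n (2 * r) \<longleftrightarrow> y \<in> ball0 n r"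
  by (auto simp: ball0_def enorm_dilate_const dilate_in_space_Rn)

lemma indic_ball_dilate_2: "y \<in> space (Rn n) \<Longrightarrow> indic_ball n (2 * r) (dilate n (\<lambda>_. 2) y) = indic_ball n r y"
  by (simp add: indic_ball_def indicator_def dilate_2_in_ball0_iff)

lemma emeasure_ball0_double: "emeasure (Rn n) (ball0 n (2 * r)) = ennreal (2 ^ n) * emeasure (Rn n) (ball0 n r)"
proof -
  have "emeasure (Rn n) (ball0 n r) = (\<integral>\<^sup>+y. indicator (ball0 n r) y \<partial>Rn n)"
    by simp
  also have "\<dots> = (\<integral>\<^sup>+y. indicator (ball0 n (2 * r)) (dilate n (\<lambda>_. 2) y) \<partial>Rn n)"
    by (intro nn_integral_cong) (simp add: indicator_def dilate_2_in_ball0_iff)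
  also have "\<dots> = ennreal ((1 / 2) ^ n) * emeasure (Rn n) (ball0 n (2 * r))"
    by (simp add: nn_integral_Rn_dilate)
  finally have "ennreal (2 ^ n) * emeasure (Rn n) (ball0 n r)
      = ennreal (2 ^ n * (1 / 2) ^ n) * emeasure (Rn n) (ball0 n (2 * r))"
    by (simp add: ennreal_mult mult.assoc)
  then show ?thesis
    by (simp add: power_mult_distrib[symmetric])
qed

lemma measure_ball0_double: "measure (Rn n) (ball0 n (2 * r)) = 2 ^ n * measure (Rn n) (ball0 n r)"
  by (simp add: measure_def emeasure_ball0_double enn2real_mult)

lemma mixnorm_indic_ball0_double:
  assumes p: "\<forall>i<n. p i > 0"
  shows "mixnorm n p (indic_ball n (2 * r)) = ennreal (2 powr (\<Sum>i<n. 1 / p i)) * mixnorm n p (indic_ball n r)"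
proof -
  have [measurable]: "(\<lambda>y. ennreal \<bar>indic_ball n (2 * r) y\<bar>) \<in> borel_measurable (Rn n)"
    by measurable
  have "mixnorm n p (indic_ball n r) = emixnorm n p (\<lambda>y. ennreal \<bar>indic_ball n (2 * r) (dilate n (\<lambda>_. 2) y)\<bar>)"
    unfolding mixnorm_eq_emixnorm by (intro emixnorm_cong_space[OF p]) (simp add: indic_ball_dilate_2)
  also have "\<dots> = ennreal (\<Prod>i<n. \<bar>2\<bar> powr (- 1 / p i)) * mixnorm n p (indic_ball n (2 * r))"
    unfolding mixnorm_eq_emixnorm
    by (rule emixnorm_dilate[where G="\<lambda>y. ennreal \<bar>indic_ball n (2 * r) y\<bar>"]) (use p in auto)
  also have "(\<Prod>i<n. \<bar>2::real\<bar> powr (- 1 / p i)) = 2 powr (- (\<Sum>i<n. 1 / p i))"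
    by (simp add: powr_sum sum_negf[symmetric])
  finally have "ennreal (2 powr (\<Sum>i<n. 1 / p i)) * mixnorm n p (indic_ball n r)
      = ennreal (2 powr (\<Sum>i<n. 1 / p i) * 2 powr (- (\<Sum>i<n. 1 / p i))) * mixnorm n p (indic_ball n (2 * r))"
    by (simp add: ennreal_mult mult.assoc)
  then show ?thesis
    by (simp flip: powr_add)
qed

section \<open>Domination of the Hardy operators by averages of dilates\<close>

lemma abs_set_integral_le_nn_integral:
  fixes g :: "'a \<Rightarrow> real"
  shows "ennreal \<bar>LINT t:A|M. g t\<bar> \<le> (\<integral>\<^sup>+t. ennreal (indicator A t * \<bar>g t\<bar>) \<partial>M)"
proof (cases "integrable M (\<lambda>t. indicator A t *\<^sub>R g t)")
  case True
  have "norm (indicator A t *\<^sub>R g t) = indicator A t * \<bar>g t\<bar>" for t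
    by (simp add: indicator_def)
  then show ?thesis
    using integral_norm_bound_ennreal[OF True] by (simp add: set_lebesgue_integral_def)
qed (simp add: set_lebesgue_integral_def not_integrable_integral_eq)

lemma powr_minus_mult_prod_abs:
  assumes "\<rho> > 0"
  shows "\<rho> powr (- real n) * (\<Prod>i<n. \<bar>x i\<bar>) = (\<Prod>i<n. \<bar>x i\<bar> / \<rho>)"
proof -
  have "\<rho> powr (- real n) = 1 / \<rho> ^ n"
    using assms by (simp add: powr_minus powr_realpow divide_inverse)
  then show ?thesis
    by (simp add: prod_dividef)
qed

text \<open>Both Hardy operators are handled through this lemma: H with S = B(0,|x|) and rho(t) = |x|,
the adjoint on each dyadic shell with rho(t) = |t|.\<close>

lemma nn_integral_weighted_le_dilation_average:
  assumes x: "x \<in> space (Rn n)" "\<forall>i<n. x i \<noteq> 0"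
    and [measurable]: "f \<in> borel_measurable (Rn n)" "S \<in> sets (Rn n)" "\<rho> \<in> borel_measurable (Rn n)"
    and S: "\<And>t. t \<in> S \<Longrightarrow> \<rho> t > 0 \<and> enorm n t \<le> \<rho> t \<and> (\<forall>i<n. \<bar>x i\<bar> \<le> e * \<rho> t) \<and> t \<in> ball0 n r"
  shows "(\<integral>\<^sup>+t. ennreal (indicator S t * \<rho> t powr (- real n) * \<bar>f t\<bar>) \<partial>Rn n)
     \<le> (\<integral>\<^sup>+s. ennreal (dilation_weight n e s) * ennreal \<bar>f (dilate n s x) * indic_ball n r (dilate n s x)\<bar> \<partial>Rn n)"
proof (rule nn_integral_Rn_le_dilate[OF x])
  fix s assume s: "s \<in> space (Rn n)" "\<forall>i<n. s i \<noteq> 0"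
  define t where "t = dilate n s x"
  have "ennreal (\<Prod>i<n. \<bar>x i\<bar>) * ennreal (indicator S t * \<rho> t powr (- real n) * \<bar>f t\<bar>)
      \<le> ennreal (dilation_weight n e s) * ennreal \<bar>f t * indic_ball n r t\<bar>"
  proof (cases "t \<in> S")
    case True
    note t = S[OF True]
    have w: "(\<Prod>i<n. \<bar>x i\<bar> / \<rho> t) \<le> dilation_weight n e s"
    proof (rule prod_abs_div_le_dilation_weight)
      show "\<forall>i<n. \<bar>s i\<bar> * \<bar>x i\<bar> \<le> \<rho> t"
        using abs_mult_le_enorm_dilate[of _ n s x] t by (auto simp: t_def intro: order_trans)
    qed (use t s in auto)
    have "(\<Prod>i<n. \<bar>x i\<bar>) * (indicator S t * \<rho> t powr (- real n) * \<bar>f t\<bar>) = (\<Prod>i<n. \<bar>x i\<bar> / \<rho> t) * \<bar>f t\<bar>"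
      using True t powr_minus_mult_prod_abs[of "\<rho> t" n x] by (simp add: mult_ac)
    also have "\<dots> \<le> dilation_weight n e s * \<bar>f t * indic_ball n r t\<bar>"
      using w t by (simp add: mult_right_mono indic_ball_def)
    finally have "ennreal ((\<Prod>i<n. \<bar>x i\<bar>) * (indicator S t * \<rho> t powr (- real n) * \<bar>f t\<bar>))
        \<le> ennreal (dilation_weight n e s * \<bar>f t * indic_ball n r t\<bar>)"
      by (rule ennreal_leI)
    moreover have "0 \<le> dilation_weight n e s"
      using w t by (smt (verit) divide_nonneg_pos abs_ge_zero prod_nonneg)
    ultimately show ?thesis
      by (simp add: ennreal_mult'[symmetric] prod_nonneg)
  qed simp
  then show "ennreal (\<Prod>i<n. \<bar>x i\<bar>) * ennreal (indicator S (dilate n s x) * \<rho> (dilate n s x) powr (- real n) * \<bar>f (dilate n s x)\<bar>)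
      \<le> ennreal (dilation_weight n e s) * ennreal \<bar>f (dilate n s x) * indic_ball n r (dilate n s x)\<bar>"
    by (simp add: t_def)
qed measurable

lemma hardy_ball_le_dilation_average:
  assumes n: "n \<ge> 1" and [measurable]: "f \<in> borel_measurable (Rn n)"
    and x: "x \<in> space (Rn n)" "\<forall>i<n. x i \<noteq> 0"
  shows "ennreal \<bar>hardy n f x * indic_ball n r x\<bar>
     \<le> (\<integral>\<^sup>+s. ennreal (dilation_weight n 1 s) * ennreal \<bar>f (dilate n s x) * indic_ball n r (dilate n s x)\<bar> \<partial>Rn n)"
proof (cases "x \<in> ball0 n r")
  case True
  define \<rho> where "\<rho> = enorm n x"
  have \<rho>: "\<rho> > 0" "\<rho> < r"
    using enorm_pos[OF n x(2)] True by (auto simp: \<rho>_def ball0_def)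
  define A where "A = {t \<in> space (Rn n). enorm n t < \<rho>}"
  have [measurable]: "A \<in> sets (Rn n)"
    unfolding A_def by measurable
  have "ennreal \<bar>hardy n f x * indic_ball n r x\<bar> = ennreal (\<rho> powr (- real n)) * ennreal \<bar>LINT t:A|Rn n. f t\<bar>"
    using True by (simp add: hardy_def A_def \<rho>_def indic_ball_def abs_mult ennreal_mult)
  also have "\<dots> \<le> ennreal (\<rho> powr (- real n)) * (\<integral>\<^sup>+t. ennreal (indicator A t * \<bar>f t\<bar>) \<partial>Rn n)"
    by (intro mult_left_mono abs_set_integral_le_nn_integral) auto
  also have "\<dots> = (\<integral>\<^sup>+t. ennreal (indicator A t * \<rho> powr (- real n) * \<bar>f t\<bar>) \<partial>Rn n)"
    by (simp add: nn_integral_cmult[symmetric] ennreal_mult[symmetric] mult_ac)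
  also have "\<dots> \<le> (\<integral>\<^sup>+s. ennreal (dilation_weight n 1 s) * ennreal \<bar>f (dilate n s x) * indic_ball n r (dilate n s x)\<bar> \<partial>Rn n)"
    using \<rho> abs_le_enorm[of _ n x]
    by (intro nn_integral_weighted_le_dilation_average[OF x]) (auto simp: A_def ball0_def \<rho>_def)
  finally show ?thesis .
qed (simp add: indic_ball_def)

definition dyadic_shell :: "nat \<Rightarrow> real \<Rightarrow> nat \<Rightarrow> (nat \<Rightarrow> real) set" where
  "dyadic_shell n R k = {t \<in> space (Rn n). (k = 0 \<or> 2 ^ k * R \<le> enorm n t) \<and> enorm n t < 2 ^ (k + 1) * R}"

lemma dyadic_shell_in_sets [measurable]: "dyadic_shell n R k \<in> sets (Rn n)"
  unfolding dyadic_shell_def by measurable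

lemma dyadic_shell_cover:
  assumes R: "R > 0" and t: "t \<in> space (Rn n)"
  shows "\<exists>k. t \<in> dyadic_shell n R k"
proof -
  obtain m :: nat where "enorm n t / R < real m"
    using reals_Archimedean2 by blast
  moreover have "real m < 2 ^ m" "(2::real) ^ m \<le> 2 ^ (m + 1)"
    using of_nat_less_two_power[of m] by simp_all
  ultimately have "enorm n t / R < 2 ^ (m + 1)"
    by linarith
  then have "enorm n t < 2 ^ (m + 1) * R"
    using R by (simp add: field_simps)
  then have ex: "\<exists>k. enorm n t < 2 ^ (k + 1) * R" ..
  define k where "k = (LEAST k. enorm n t < 2 ^ (k + 1) * R)"
  have "enorm n t < 2 ^ (k + 1) * R"
    unfolding k_def using ex by (rule LeastI_ex)
  moreover have "k = 0 \<or> 2 ^ k * R \<le> enorm n t"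
  proof (cases k)
    case (Suc j)
    then have "\<not> enorm n t < 2 ^ (j + 1) * R"
      using not_less_Least[of j "\<lambda>k. enorm n t < 2 ^ (k + 1) * R"] by (simp add: k_def)
    then show ?thesis
      using Suc by simp
  qed simp
  ultimately show ?thesis
    using t unfolding dyadic_shell_def by blast
qed

text \<open>This is where the smaller weight min(2^-k, 1/|s_i|) on the k-th shell comes from.\<close>

lemma abs_le_enorm_dyadic_shell:
  assumes "enorm n x < R" "enorm n x \<le> enorm n t" "t \<in> dyadic_shell n R k" "i < n"
  shows "\<bar>x i\<bar> \<le> 1 / 2 ^ k * enorm n t"
proof -
  have "2 ^ k * \<bar>x i\<bar> \<le> enorm n t"
  proof (cases "k = 0")
    case False
    then have "2 ^ k * R \<le> enorm n t"
      using assms(3) by (simp add: dyadic_shell_def)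
    moreover have "2 ^ k * \<bar>x i\<bar> \<le> 2 ^ k * R"
      using abs_le_enorm[OF assms(4), of x] assms(1) by simp
    ultimately show ?thesis
      by linarith
  qed (use assms abs_le_enorm[OF assms(4), of x] in simp)
  then show ?thesis
    by (simp add: field_simps)
qed

lemma hardy_adj_ball_le_dilation_averages:
  assumes n: "n \<ge> 1" and [measurable]: "f \<in> borel_measurable (Rn n)" and R: "R > 0"
    and x: "x \<in> space (Rn n)" "\<forall>i<n. x i \<noteq> 0"
  shows "ennreal \<bar>hardy_adj n f x * indic_ball n R x\<bar>
     \<le> (\<Sum>k. \<integral>\<^sup>+s. ennreal (dilation_weight n (1 / 2 ^ k) s)
                 * ennreal \<bar>f (dilate n s x) * indic_ball n (2 ^ (k + 1) * R) (dilate n s x)\<bar> \<partial>Rn n)"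
proof (cases "x \<in> ball0 n R")
  case True
  define \<rho> where "\<rho> = enorm n x"
  have \<rho>: "\<rho> > 0" "\<rho> < R"
    using enorm_pos[OF n x(2)] True by (auto simp: \<rho>_def ball0_def)
  define A where "A = {t \<in> space (Rn n). \<rho> \<le> enorm n t}"
  have [measurable]: "A \<in> sets (Rn n)"
    unfolding A_def by measurable
  define h where "h k t = ennreal (indicator (A \<inter> dyadic_shell n R k) t * enorm n t powr (- real n) * \<bar>f t\<bar>)" for k t
  have [measurable]: "h k \<in> borel_measurable (Rn n)" for k
    unfolding h_def by measurable
  have "ennreal \<bar>hardy_adj n f x * indic_ball n R x\<bar> = ennreal \<bar>LINT t:A|Rn n. f t * enorm n t powr (- real n)\<bar>"
    using True by (simp add: hardy_adj_def A_def \<rho>_def indic_ball_def)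
  also have "\<dots> \<le> (\<integral>\<^sup>+t. ennreal (indicator A t * \<bar>f t * enorm n t powr (- real n)\<bar>) \<partial>Rn n)"
    by (rule abs_set_integral_le_nn_integral)
  also have "\<dots> \<le> (\<integral>\<^sup>+t. (\<Sum>k. h k t) \<partial>Rn n)"
  proof (rule nn_integral_mono)
    fix t assume t: "t \<in> space (Rn n)"
    then obtain k where k: "t \<in> dyadic_shell n R k"
      using dyadic_shell_cover[OF R] by blast
    have "ennreal (indicator A t * \<bar>f t * enorm n t powr (- real n)\<bar>) = h k t"
      using k by (simp add: h_def abs_mult mult_ac split: split_indicator)
    also have "\<dots> \<le> (\<Sum>k. h k t)"
      using ennreal_suminf_lessD[of "\<lambda>k. h k t"] sum_le_suminf[of "\<lambda>k. h k t" "{k}"] by (simp add: summableI)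
    finally show "ennreal (indicator A t * \<bar>f t * enorm n t powr (- real n)\<bar>) \<le> (\<Sum>k. h k t)" .
  qed
  also have "\<dots> = (\<Sum>k. \<integral>\<^sup>+t. h k t \<partial>Rn n)"
    by (rule nn_integral_suminf) measurable
  also have "\<dots> \<le> (\<Sum>k. \<integral>\<^sup>+s. ennreal (dilation_weight n (1 / 2 ^ k) s)
                 * ennreal \<bar>f (dilate n s x) * indic_ball n (2 ^ (k + 1) * R) (dilate n s x)\<bar> \<partial>Rn n)"
  proof (intro suminf_le summableI)
    fix k :: nat
    have "\<bar>x i\<bar> \<le> 1 / 2 ^ k * enorm n t" if "t \<in> A \<inter> dyadic_shell n R k" "i < n" for t i
      using abs_le_enorm_dyadic_shell[of n x R t k i] that \<rho> by (simp add: A_def \<rho>_def)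
    then show "(\<integral>\<^sup>+t. h k t \<partial>Rn n) \<le> (\<integral>\<^sup>+s. ennreal (dilation_weight n (1 / 2 ^ k) s)
                 * ennreal \<bar>f (dilate n s x) * indic_ball n (2 ^ (k + 1) * R) (dilate n s x)\<bar> \<partial>Rn n)"
      unfolding h_def using \<rho>
      by (intro nn_integral_weighted_le_dilation_average[OF x])
        (auto simp: A_def dyadic_shell_def ball0_def \<rho>_def)
  qed
  finally show ?thesis .
qed (simp add: indic_ball_def)

section \<open>Local bounds and the Morrey norm\<close>

lemma mixnorm_hardy_ball_le:
  assumes n: "n \<ge> 1" and p: "\<forall>i<n. p i > 1" and [measurable]: "f \<in> borel_measurable (Rn n)"
  shows "mixnorm n p (\<lambda>x. hardy n f x * indic_ball n r x)
     \<le> (\<Prod>i<n. hardy_const (p i)) * mixnorm n p (\<lambda>x. f x * indic_ball n r x)"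
proof -
  define g where "g y = ennreal \<bar>f y * indic_ball n r y\<bar>" for y
  have [measurable]: "g \<in> borel_measurable (Rn n)"
    unfolding g_def by measurable
  have "mixnorm n p (\<lambda>x. hardy n f x * indic_ball n r x)
      \<le> emixnorm n p (\<lambda>x. \<integral>\<^sup>+s. ennreal (dilation_weight n 1 s) * g (dilate n s x) \<partial>Rn n)"
    unfolding mixnorm_eq_emixnorm g_def using p hardy_ball_le_dilation_average[OF n]
    by (intro emixnorm_mono_nonzero) auto
  also have "\<dots> \<le> (\<Prod>i<n. ennreal (1 powr (1 / p i)) * hardy_const (p i)) * emixnorm n p g"
    by (rule emixnorm_dilation_average_le[OF p]) auto
  finally show ?thesis
    by (simp add: mixnorm_eq_emixnorm g_def[abs_def])
qed

lemma mixnorm_hardy_adj_ball_le: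
  assumes n: "n \<ge> 1" and p: "\<forall>i<n. p i > 1" and [measurable]: "f \<in> borel_measurable (Rn n)" and R: "R > 0"
  shows "mixnorm n p (\<lambda>x. hardy_adj n f x * indic_ball n R x)
     \<le> (\<Sum>k. ennreal ((1 / 2 ^ k) powr (\<Sum>i<n. 1 / p i)) * (\<Prod>i<n. hardy_const (p i))
               * mixnorm n p (\<lambda>x. f x * indic_ball n (2 ^ (k + 1) * R) x))"
proof -
  define g where "g k y = ennreal \<bar>f y * indic_ball n (2 ^ (k + 1) * R) y\<bar>" for k y
  have [measurable]: "g k \<in> borel_measurable (Rn n)" for k
    unfolding g_def by measurable
  define W where "W k x = (\<integral>\<^sup>+s. ennreal (dilation_weight n (1 / 2 ^ k) s) * g k (dilate n s x) \<partial>Rn n)" for k x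
  have [measurable]: "W k \<in> borel_measurable (Rn n)" for k
    unfolding W_def by measurable
  have "mixnorm n p (\<lambda>x. hardy_adj n f x * indic_ball n R x) \<le> emixnorm n p (\<lambda>x. \<Sum>k. W k x)"
    unfolding mixnorm_eq_emixnorm W_def g_def using p hardy_adj_ball_le_dilation_averages[OF n _ R]
    by (intro emixnorm_mono_nonzero) auto
  also have "\<dots> \<le> (\<Sum>k. emixnorm n p (W k))"
    by (rule emixnorm_suminf_le[OF p]) measurable
  also have "\<dots> \<le> (\<Sum>k. ennreal ((1 / 2 ^ k) powr (\<Sum>i<n. 1 / p i)) * (\<Prod>i<n. hardy_const (p i))
               * mixnorm n p (\<lambda>x. f x * indic_ball n (2 ^ (k + 1) * R) x))"
  proof (intro suminf_le summableI)
    fix k :: nat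
    have "(\<Prod>i<n. ennreal ((1 / 2 ^ k) powr (1 / p i)) * hardy_const (p i))
        = ennreal ((1 / 2 ^ k) powr (\<Sum>i<n. 1 / p i)) * (\<Prod>i<n. hardy_const (p i))"
      by (simp add: prod.distrib prod_ennreal powr_sum)
    then show "emixnorm n p (W k) \<le> ennreal ((1 / 2 ^ k) powr (\<Sum>i<n. 1 / p i)) * (\<Prod>i<n. hardy_const (p i))
               * mixnorm n p (\<lambda>x. f x * indic_ball n (2 ^ (k + 1) * R) x)"
      using emixnorm_dilation_average_le[OF p, of "1 / 2 ^ k" "g k"]
      by (simp add: W_def[abs_def] mixnorm_eq_emixnorm g_def[abs_def])
  qed
  finally show ?thesis .
qed

definition morrey_weight :: "nat \<Rightarrow> (nat \<Rightarrow> real) \<Rightarrow> real \<Rightarrow> real \<Rightarrow> real" where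
  "morrey_weight n p lam r = measure (Rn n) (ball0 n r) powr lam * enn2real (mixnorm n p (indic_ball n r))"

lemma morrey_norm_eq_SUP:
  "morrey_norm n p lam f
     = (SUP r\<in>{0<..}. mixnorm n p (\<lambda>x. f x * indic_ball n r x) * ennreal (1 / morrey_weight n p lam r))"
  by (simp add: morrey_norm_def morrey_weight_def)

lemma morrey_weight_nonneg: "morrey_weight n p lam r \<ge> 0"
  by (simp add: morrey_weight_def)

lemma morrey_weight_double:
  assumes "\<forall>i<n. p i > 0"
  shows "morrey_weight n p lam (2 * r) = 2 powr (real n * lam + (\<Sum>i<n. 1 / p i)) * morrey_weight n p lam r"
proof -
  have "measure (Rn n) (ball0 n (2 * r)) powr lam = 2 powr (real n * lam) * measure (Rn n) (ball0 n r) powr lam"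
    by (simp add: measure_ball0_double powr_mult powr_realpow[symmetric] powr_powr)
  moreover have "enn2real (mixnorm n p (indic_ball n (2 * r)))
      = 2 powr (\<Sum>i<n. 1 / p i) * enn2real (mixnorm n p (indic_ball n r))"
    using assms by (simp add: mixnorm_indic_ball0_double enn2real_mult)
  ultimately show ?thesis
    by (simp add: morrey_weight_def powr_add mult_ac)
qed

lemma morrey_weight_power2:
  assumes "\<forall>i<n. p i > 0"
  shows "morrey_weight n p lam (2 ^ k * r) = (2 powr (real n * lam + (\<Sum>i<n. 1 / p i))) ^ k * morrey_weight n p lam r"
proof (induction k)
  case (Suc k)
  have "morrey_weight n p lam (2 ^ Suc k * r) = morrey_weight n p lam (2 * (2 ^ k * r))"
    by (simp add: mult.assoc)
  then show ?case
    using Suc assms by (simp add: morrey_weight_double)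
qed simp

lemma mixnorm_ball_le_morrey_norm:
  assumes "r > 0" "morrey_weight n p lam r > 0"
  shows "mixnorm n p (\<lambda>x. f x * indic_ball n r x) \<le> morrey_norm n p lam f * ennreal (morrey_weight n p lam r)"
proof -
  have "mixnorm n p (\<lambda>x. f x * indic_ball n r x) * ennreal (1 / morrey_weight n p lam r) \<le> morrey_norm n p lam f"
    unfolding morrey_norm_eq_SUP using assms(1) by (intro SUP_upper2[of r]) auto
  then have "mixnorm n p (\<lambda>x. f x * indic_ball n r x) * (ennreal (1 / morrey_weight n p lam r) * ennreal (morrey_weight n p lam r))
      \<le> morrey_norm n p lam f * ennreal (morrey_weight n p lam r)"
    by (simp add: mult.assoc[symmetric] mult_right_mono)
  then show ?thesis
    using assms(2) by (simp add: ennreal_mult'[symmetric])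
qed

lemma morrey_norm_le_if_ball_bound:
  assumes "\<And>r. r > 0 \<Longrightarrow> mixnorm n p (\<lambda>x. T x * indic_ball n r x) \<le> C * mixnorm n p (\<lambda>x. f x * indic_ball n r x)"
  shows "morrey_norm n p lam T \<le> C * morrey_norm n p lam f"
  unfolding morrey_norm_eq_SUP
proof (rule SUP_least)
  fix r :: real assume r: "r \<in> {0<..}"
  have "mixnorm n p (\<lambda>x. T x * indic_ball n r x) * ennreal (1 / morrey_weight n p lam r)
      \<le> C * (mixnorm n p (\<lambda>x. f x * indic_ball n r x) * ennreal (1 / morrey_weight n p lam r))"
    using assms r by (simp add: mult.assoc[symmetric] mult_right_mono)
  also have "\<dots> \<le> C * (SUP r\<in>{0<..}. mixnorm n p (\<lambda>x. f x * indic_ball n r x) * ennreal (1 / morrey_weight n p lam r))"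
    using r by (intro mult_left_mono SUP_upper) auto
  finally show "mixnorm n p (\<lambda>x. T x * indic_ball n r x) * ennreal (1 / morrey_weight n p lam r)
      \<le> C * (SUP r\<in>{0<..}. mixnorm n p (\<lambda>x. f x * indic_ball n r x) * ennreal (1 / morrey_weight n p lam r))" .
qed

lemma mixnorm_dyadic_ball_le_morrey_norm:
  assumes p: "\<forall>i<n. p i > 0" and R: "R > 0" and D: "morrey_weight n p lam R > 0"
  shows "mixnorm n p (\<lambda>x. f x * indic_ball n (2 ^ k * R) x) * ennreal (1 / morrey_weight n p lam R)
     \<le> ennreal ((2 powr (real n * lam + (\<Sum>i<n. 1 / p i))) ^ k) * morrey_norm n p lam f"
proof -
  define a D where "a = (2::real) powr (real n * lam + (\<Sum>i<n. 1 / p i))" and "D = morrey_weight n p lam R"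
  have "morrey_weight n p lam (2 ^ k * R) = a ^ k * D"
    using p by (simp add: morrey_weight_power2 a_def D_def)
  then have "mixnorm n p (\<lambda>x. f x * indic_ball n (2 ^ k * R) x) * ennreal (1 / D)
      \<le> morrey_norm n p lam f * ennreal (a ^ k * D) * ennreal (1 / D)"
    using mixnorm_ball_le_morrey_norm[where r="2 ^ k * R" and f=f and n=n and p=p and lam=lam] R D
    by (intro mult_right_mono) (auto simp: a_def D_def)
  also have "\<dots> = morrey_norm n p lam f * (ennreal (a ^ k * D) * ennreal (1 / D))"
    by (simp only: mult.assoc)
  also have "ennreal (a ^ k * D) * ennreal (1 / D) = ennreal (a ^ k)"
    using D by (simp add: D_def a_def ennreal_mult'[symmetric])
  finally show ?thesis
    by (simp add: a_def D_def mult.commute)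
qed

text \<open>The Hardy operator at x in B(0,r) only sees f on B(0,r), so no condition on lam is
needed.\<close>

lemma hardy_bounded_morrey:
  assumes "n \<ge> 1" and p: "\<forall>i<n. p i > 1"
  shows "bounded_op (hardy n) (morrey_space n p lam) (morrey_norm n p lam) (morrey_norm n p lam)"
  unfolding bounded_op_def
proof (intro exI ballI)
  fix f assume "f \<in> morrey_space n p lam"
  then have "f \<in> borel_measurable (Rn n)"
    by (simp add: morrey_space_def)
  then show "morrey_norm n p lam (hardy n f)
      \<le> ennreal (\<Prod>i<n. enn2real (hardy_const (p i))) * morrey_norm n p lam f"
    unfolding prod_hardy_const_eq_ennreal[OF p, symmetric]
    by (intro morrey_norm_le_if_ball_bound mixnorm_hardy_ball_le assms)
qed

lemma dyadic_powr_identity: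
  "((1::real) / 2 ^ k) powr s * (2 powr (m + s)) ^ (k + 1) = 2 powr (m + s) * (2 powr m) ^ k"
proof -
  have "(1::real) / 2 ^ k = 2 powr (- real k)"
    by (simp add: powr_minus powr_realpow divide_inverse)
  then have "((1::real) / 2 ^ k) powr s = 2 powr (- real k * s)"
    by (simp add: powr_powr)
  moreover have "(2 powr t) ^ k = 2 powr (real k * t)" for t :: real
    by (simp add: powr_realpow[symmetric] powr_powr mult.commute)
  ultimately show ?thesis
    by (simp add: powr_add[symmetric] algebra_simps)
qed

text \<open>The k-th dyadic term is at most a * b^k times the Morrey norm of f, and b < 1 because
lam < 0.\<close>

lemma hardy_adj_ball_morrey_le:
  assumes n: "n \<ge> 1" and p: "\<forall>i<n. p i > 1" and lam: "lam < 0"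
    and [measurable]: "f \<in> borel_measurable (Rn n)" and R: "R > 0"
  defines "\<sigma> \<equiv> \<Sum>i<n. 1 / p i"
  defines "a \<equiv> (2::real) powr (real n * lam + \<sigma>)" and "b \<equiv> (2::real) powr (real n * lam)"
  defines "C \<equiv> a / (1 - b) * (\<Prod>i<n. enn2real (hardy_const (p i)))"
  shows "mixnorm n p (\<lambda>x. hardy_adj n f x * indic_ball n R x) * ennreal (1 / morrey_weight n p lam R)
     \<le> ennreal C * morrey_norm n p lam f"
proof (cases "morrey_weight n p lam R > 0")
  case True
  define D M where "D = morrey_weight n p lam R" and "M = morrey_norm n p lam f"
  define Cq where "Cq = (\<Prod>i<n. enn2real (hardy_const (p i)))"
  have p0: "\<forall>i<n. p i > 0"
    using p by auto
  have ab: "a > 0" "0 < b" "b < 1"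
    using n lam by (auto simp: a_def b_def mult_pos_neg intro: powr_less_one)
  have Cq: "Cq \<ge> 0" "(\<Prod>i<n. hardy_const (p i)) = ennreal Cq"
    using prod_hardy_const_eq_ennreal[OF p] by (auto simp: Cq_def prod_nonneg)
  have dyadic_term: "ennreal ((1 / 2 ^ k) powr \<sigma>) * ennreal Cq * mixnorm n p (\<lambda>x. f x * indic_ball n (2 ^ (k + 1) * R) x)
      * ennreal (1 / D) \<le> ennreal (a * b ^ k) * (ennreal Cq * M)" for k
  proof -
    have "mixnorm n p (\<lambda>x. f x * indic_ball n (2 ^ (k + 1) * R) x) * ennreal (1 / D) \<le> ennreal (a ^ (k + 1)) * M"
      using mixnorm_dyadic_ball_le_morrey_norm[OF p0 R True, where k="k + 1" and f=f]
      by (simp add: a_def \<sigma>_def D_def M_def)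
    then have "ennreal ((1 / 2 ^ k) powr \<sigma>) * ennreal Cq * mixnorm n p (\<lambda>x. f x * indic_ball n (2 ^ (k + 1) * R) x)
        * ennreal (1 / D) \<le> ennreal ((1 / 2 ^ k) powr \<sigma>) * ennreal Cq * (ennreal (a ^ (k + 1)) * M)"
      by (simp add: mult.assoc mult_left_mono)
    also have "\<dots> = ennreal ((1 / 2 ^ k) powr \<sigma> * a ^ (k + 1)) * (ennreal Cq * M)"
      using ab by (simp add: ennreal_mult mult_ac)
    also have "(1 / 2 ^ k) powr \<sigma> * a ^ (k + 1) = a * b ^ k"
      using dyadic_powr_identity[of k \<sigma> "real n * lam"] by (simp add: a_def b_def)
    finally show ?thesis .
  qed
  have "mixnorm n p (\<lambda>x. hardy_adj n f x * indic_ball n R x) * ennreal (1 / D)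
      \<le> (\<Sum>k. ennreal ((1 / 2 ^ k) powr \<sigma>) * ennreal Cq * mixnorm n p (\<lambda>x. f x * indic_ball n (2 ^ (k + 1) * R) x))
         * ennreal (1 / D)"
    using mixnorm_hardy_adj_ball_le[OF n p _ R] Cq by (simp add: \<sigma>_def mult_right_mono)
  also have "\<dots> \<le> (\<Sum>k. ennreal (a * b ^ k) * (ennreal Cq * M))"
    unfolding ennreal_suminf_multc[symmetric] by (intro suminf_le summableI dyadic_term)
  also have "\<dots> = ennreal (\<Sum>k. a * b ^ k) * (ennreal Cq * M)"
    using ab by (simp add: suminf_ennreal2 summable_mult)
  also have "(\<Sum>k. a * b ^ k) = a / (1 - b)"
    using ab by (simp add: suminf_mult suminf_geometric)
  also have "ennreal (a / (1 - b)) * (ennreal Cq * M) = ennreal C * M"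
    using ab by (simp add: C_def Cq_def mult.assoc[symmetric] ennreal_mult'[symmetric])
  finally show ?thesis
    by (simp add: D_def M_def)
qed (use morrey_weight_nonneg[of n p lam R] in simp)

lemma hardy_adj_bounded_morrey:
  assumes "n \<ge> 1" and "\<forall>i<n. p i > 1" and "lam < 0"
  shows "bounded_op (hardy_adj n) (morrey_space n p lam) (morrey_norm n p lam) (morrey_norm n p lam)"
  unfolding bounded_op_def
proof (intro exI ballI)
  fix f assume "f \<in> morrey_space n p lam"
  then have "f \<in> borel_measurable (Rn n)"
    by (simp add: morrey_space_def)
  then show "morrey_norm n p lam (hardy_adj n f)
      \<le> ennreal (2 powr (real n * lam + (\<Sum>i<n. 1 / p i)) / (1 - 2 powr (real n * lam))
                 * (\<Prod>i<n. enn2real (hardy_const (p i)))) * morrey_norm n p lam f"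
    unfolding morrey_norm_eq_SUP[of n p lam "hardy_adj n f"]
    using assms hardy_adj_ball_morrey_le[folded morrey_norm_eq_SUP] by (intro SUP_least) auto
qed

theorem theorem3p1:
  fixes n :: nat and p :: "nat \<Rightarrow> real" and lam :: real
  assumes "1 \<le> n"
    and "\<forall>i<n. 1 < p i"
    and "- (1 / real n) * (\<Sum>i<n. 1 / p i) < lam" and "lam < 0"
  shows "bounded_op (hardy n) (morrey_space n p lam) (morrey_norm n p lam) (morrey_norm n p lam)
     \<and> bounded_op (hardy_adj n) (morrey_space n (\<lambda>i. p i / (p i - 1)) lam)
           (morrey_norm n (\<lambda>i. p i / (p i - 1)) lam) (morrey_norm n (\<lambda>i. p i / (p i - 1)) lam)"
proof
  show "bounded_op (hardy n) (morrey_space n p lam) (morrey_norm n p lam) (morrey_norm n p lam)"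
    using assms(1,2) by (rule hardy_bounded_morrey)
  have "\<forall>i<n. 1 < p i / (p i - 1)"
    using assms(2) by (auto simp: field_simps)
  then show "bounded_op (hardy_adj n) (morrey_space n (\<lambda>i. p i / (p i - 1)) lam)
           (morrey_norm n (\<lambda>i. p i / (p i - 1)) lam) (morrey_norm n (\<lambda>i. p i / (p i - 1)) lam)"
    using assms(1,4) by (intro hardy_adj_bounded_morrey)
qed

end
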